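(* Let $S$ be a semilocal generalized Krull domain with maximal ideals $\mathfrak{m}_1, \dots, \mathfrak{m}_n$, where $n \geq 2$ and $\operatorname{ht} \mathfrak{m}_j \geq 2$ for all $j$. Suppose each residue field $S/\mathfrak{m}_i$ is isomorphic to a fixed field $k$, and fix isomorphisms $\alpha_i : k \to S/\mathfrak{m}_i$. Let $J = \mathfrak{m}_1 \cap \cdots \cap \mathfrak{m}_n = \prod_j \mathfrak{m}_j$, let $p: S \to S/J$ be the canonical projection, and let $h : k \to S/J$ be the composition of $\lambda \mapsto (\alpha_1(\lambda), \dots, \alpha_n(\lambda)) \in \prod_{i=1}^n S/\mathfrak{m}_i$ with the Chinese Remainder isomorphism $\prod_i S/\mathfrak{m}_i \cong S/J$. Let $R$ be the pullback of $p$ and $h$, i.e. $R = \{(s,\lambda) \in S \times k : p(s) = h(\lambda)\}$ (identified with a subring of $S$). Then $R$ is local and perinormal; moreover $R$ is globally perinormal if $S$ is. However, $R$ is not integrally closed, since its integral closure is $S$.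
   Context: All rings are commutative with identity; "local" means having a unique maximal ideal; an overring of a domain $R$ is a ring between $R$ and its fraction field. A ring extension $A \subseteq B$ satisfies going-down if whenever $\mathfrak{p} \subset \mathfrak{q}$ are primes of $A$ and $Q$ is a prime of $B$ with $Q \cap A = \mathfrak{q}$, there is a prime $P \subseteq Q$ of $B$ with $P \cap A = \mathfrak{p}$. A domain $R$ is perinormal if every local overring $S$ of $R$ such that $R \subseteq S$ satisfies going-down is a localization of $R$; it is globally perinormal if every overring (local or not) $S$ of $R$ such that $R \subseteq S$ satisfies going-down is a localization of $R$ at a multiplicative set. A ring satisfies (R$_1$) if its localization at every height one prime is a valuation domain. A domain $R$ is a generalized Krull domain if (1) $R = \bigcap_{\mathfrak{p}} R_{\mathfrak{p}}$ over all height one primes $\mathfrak{p}$, (2) every nonzero element lies in only finitely many height one primes, and (3) $R$ satisfies (R$_1$). *)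

theory Defs
  imports "HOL-Algebra.QuotRing"
begin

text \<open>All rings considered are subrings of a fixed ambient field of type 'a.
  Ideals, primes etc. are relative to a subring A.\<close>

definition subring_of :: "'a::field set \<Rightarrow> bool" where
  "subring_of A \<longleftrightarrow> 0 \<in> A \<and> 1 \<in> A \<and> (\<forall>x\<in>A. \<forall>y\<in>A. x + y \<in> A \<and> x - y \<in> A \<and> x * y \<in> A)"

definition ideal_in :: "'a::field set \<Rightarrow> 'a set \<Rightarrow> bool" where
  "ideal_in A I \<longleftrightarrow> I \<subseteq> A \<and> 0 \<in> I \<and> (\<forall>x\<in>I. \<forall>y\<in>I. x + y \<in> I)
     \<and> (\<forall>a\<in>A. \<forall>x\<in>I. a * x \<in> I)"

definition prime_in :: "'a::field set \<Rightarrow> 'a set \<Rightarrow> bool" where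
  "prime_in A P \<longleftrightarrow> ideal_in A P \<and> P \<noteq> A \<and> (\<forall>a\<in>A. \<forall>b\<in>A. a * b \<in> P \<longrightarrow> a \<in> P \<or> b \<in> P)"

definition maximal_in :: "'a::field set \<Rightarrow> 'a set \<Rightarrow> bool" where
  "maximal_in A M \<longleftrightarrow> ideal_in A M \<and> M \<noteq> A \<and>
     (\<forall>J. ideal_in A J \<and> M \<subseteq> J \<longrightarrow> J = M \<or> J = A)"

definition local_ring :: "'a::field set \<Rightarrow> bool" where
  "local_ring A \<longleftrightarrow> (\<exists>!M. maximal_in A M)"

definition height_ge2 :: "'a::field set \<Rightarrow> 'a set \<Rightarrow> bool" where
  "height_ge2 A P \<longleftrightarrow> (\<exists>P0 P1. prime_in A P0 \<and> prime_in A P1 \<and> P0 \<subset> P1 \<and> P1 \<subset> P)"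

definition height_one :: "'a::field set \<Rightarrow> 'a set \<Rightarrow> bool" where
  "height_one A P \<longleftrightarrow> prime_in A P \<and> (\<exists>Q. prime_in A Q \<and> Q \<subset> P) \<and> \<not> height_ge2 A P"

definition frac :: "'a::field set \<Rightarrow> 'a set" where
  "frac A = {a / b | a b. a \<in> A \<and> b \<in> A \<and> b \<noteq> 0}"

definition multiplicative_in :: "'a::field set \<Rightarrow> 'a set \<Rightarrow> bool" where
  "multiplicative_in A M \<longleftrightarrow> M \<subseteq> A \<and> 1 \<in> M \<and> 0 \<notin> M \<and> (\<forall>x\<in>M. \<forall>y\<in>M. x * y \<in> M)"

definition loc :: "'a::field set \<Rightarrow> 'a set \<Rightarrow> 'a set" where
  "loc A M = {a / m | a m. a \<in> A \<and> m \<in> M}"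

definition loc_prime :: "'a::field set \<Rightarrow> 'a set \<Rightarrow> 'a set" where
  "loc_prime A P = loc A (A - P)"

definition overring :: "'a::field set \<Rightarrow> 'a set \<Rightarrow> bool" where
  "overring A T \<longleftrightarrow> subring_of T \<and> A \<subseteq> T \<and> T \<subseteq> frac A"

definition going_down :: "'a::field set \<Rightarrow> 'a set \<Rightarrow> bool" where
  "going_down A B \<longleftrightarrow> (\<forall>p q Q. prime_in A p \<and> prime_in A q \<and> p \<subset> q \<and>
      prime_in B Q \<and> Q \<inter> A = q \<longrightarrow> (\<exists>P. prime_in B P \<and> P \<subseteq> Q \<and> P \<inter> A = p))"

definition perinormal :: "'a::field set \<Rightarrow> bool" where
  "perinormal A \<longleftrightarrow> subring_of A \<and> (\<forall>T. overring A T \<and> local_ring T \<and> going_down A T \<longrightarrow>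
      (\<exists>P. prime_in A P \<and> T = loc_prime A P))"

definition globally_perinormal :: "'a::field set \<Rightarrow> bool" where
  "globally_perinormal A \<longleftrightarrow> subring_of A \<and> (\<forall>T. overring A T \<and> going_down A T \<longrightarrow>
      (\<exists>M. multiplicative_in A M \<and> T = loc A M))"

definition valuation_domain :: "'a::field set \<Rightarrow> bool" where
  "valuation_domain V \<longleftrightarrow> subring_of V \<and> (\<forall>x\<in>frac V. x \<noteq> 0 \<longrightarrow> x \<in> V \<or> inverse x \<in> V)"

definition R1 :: "'a::field set \<Rightarrow> bool" where
  "R1 A \<longleftrightarrow> (\<forall>P. height_one A P \<longrightarrow> valuation_domain (loc_prime A P))"

definition gen_krull :: "'a::field set \<Rightarrow> bool" where
  "gen_krull A \<longleftrightarrow> subring_of A \<and>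
     A = frac A \<inter> \<Inter>{loc_prime A P | P. height_one A P} \<and>
     (\<forall>x\<in>A. x \<noteq> 0 \<longrightarrow> finite {P. height_one A P \<and> x \<in> P}) \<and>
     R1 A"

definition integral_over :: "'a::field set \<Rightarrow> 'a \<Rightarrow> bool" where
  "integral_over A x \<longleftrightarrow> (\<exists>n::nat. \<exists>c. (\<forall>i<n. c i \<in> A) \<and> x ^ n + (\<Sum>i<n. c i * x ^ i) = 0)"

definition integral_closure :: "'a::field set \<Rightarrow> 'a set" where
  "integral_closure A = {x \<in> frac A. integral_over A x}"

definition integrally_closed :: "'a::field set \<Rightarrow> bool" where
  "integrally_closed A \<longleftrightarrow> integral_closure A = A"

definition ringS :: "'a::field set \<Rightarrow> 'a ring" where
  "ringS A = \<lparr>carrier = A, monoid.mult = (*), one = 1, zero = 0, add = (+)\<rparr>"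

text \<open>The pullback of p : S -> S/J and h : k -> S/J, identified with a subring of S.
  Via the Chinese Remainder isomorphism, p(s) = h(lambda) iff s + m_i = alpha_i(lambda) for all i.\<close>
definition pullback_ring ::
  "'a::field set \<Rightarrow> nat \<Rightarrow> (nat \<Rightarrow> 'a set) \<Rightarrow> (nat \<Rightarrow> 'b::field \<Rightarrow> 'a set) \<Rightarrow> 'a set" where
  "pullback_ring S n m \<alpha> = {s \<in> S. \<exists>c. \<forall>i<n. m i +>\<^bsub>ringS S\<^esub> s = \<alpha> i c}"

end

theory Submission
  imports Defs "HOL-Computational_Algebra.Polynomial"
begin

text \<open>Write \<open>residue i s \<in> k\<close> for the class of \<open>s\<close> modulo \<open>m\<^sub>i\<close>; then \<open>R\<close> consists of the \<open>s \<in> S\<close> all of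
  whose residues agree. Elements of \<open>R\<close> outside \<open>J\<close> lie in no \<open>m\<^sub>i\<close> and have constant residues, so
  they are units of \<open>R\<close>: \<open>R\<close> is local with maximal ideal \<open>J\<close>. Since the \<open>m\<^sub>i\<close> have height at least 2,
  \<open>J \<noteq> 0\<close>, so \<open>R\<close> and \<open>S\<close> have the same fraction field. By the Chinese remainder theorem every
  \<open>s \<in> S\<close> is congruent modulo \<open>m\<^sub>i\<close> to some \<open>t\<^sub>i \<in> R\<close>, so \<open>\<Prod>\<^sub>i (s - t\<^sub>i) \<in> J \<subseteq> R\<close> and \<open>s\<close> is
  integral over \<open>R\<close>; as \<open>S\<close> is an intersection of valuation rings, it is the integral closure of \<open>R\<close>.

  Let \<open>T\<close> be an overring of \<open>R\<close> with going down. If some prime \<open>Q\<close> of \<open>T\<close> lies over \<open>J\<close>, going down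
  gives for every height-one prime \<open>q\<close> of \<open>S\<close> a prime of \<open>T\<close> over \<open>q \<inter> R\<close>, which forces
  \<open>T \<subseteq> S\<^sub>q\<close> (as \<open>S\<^sub>q\<close> is a rank-one valuation ring), hence \<open>T \<subseteq> S\<close>; an element of \<open>T - R\<close> would then
  yield an element of \<open>Q\<close> that is a unit of \<open>S\<close>, integral over \<open>R\<close>, hence a unit of \<open>T\<close>. So \<open>T = R\<close>.
  Away from \<open>J\<close>, contraction is a bijection between the non-maximal primes \<open>q\<close> of \<open>S\<close> and the primes
  \<open>P \<noteq> J\<close> of \<open>R\<close>, with \<open>S\<^sub>q = R\<^sub>P\<close>. If \<open>T\<close> is local with maximal ideal over \<open>P \<noteq> J\<close>, this gives
  \<open>T = R\<^sub>P\<close>. If no prime of \<open>T\<close> lies over \<open>J\<close>, then \<open>S \<subseteq> T\<close> and going down passes to \<open>S \<subseteq> T\<close>,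
  so global perinormality of \<open>S\<close> makes \<open>T\<close> a localization of \<open>S\<close>, and thus of \<open>R\<close>.\<close>

lemma subring_zero: "subring_of A \<Longrightarrow> 0 \<in> A"
  and subring_one: "subring_of A \<Longrightarrow> 1 \<in> A"
  and subring_add: "subring_of A \<Longrightarrow> x \<in> A \<Longrightarrow> y \<in> A \<Longrightarrow> x + y \<in> A"
  and subring_diff: "subring_of A \<Longrightarrow> x \<in> A \<Longrightarrow> y \<in> A \<Longrightarrow> x - y \<in> A"
  and subring_mult: "subring_of A \<Longrightarrow> x \<in> A \<Longrightarrow> y \<in> A \<Longrightarrow> x * y \<in> A"
  unfolding subring_of_def by auto

lemma subring_uminus: "subring_of A \<Longrightarrow> x \<in> A \<Longrightarrow> - x \<in> A"
  using subring_diff[of A 0 x] subring_zero[of A] by simp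

lemma subring_power: "subring_of A \<Longrightarrow> x \<in> A \<Longrightarrow> x ^ k \<in> A"
  by (induction k) (auto simp: subring_one subring_mult)

lemma subring_sum: "subring_of A \<Longrightarrow> (\<And>i. i \<in> I \<Longrightarrow> f i \<in> A) \<Longrightarrow> sum f I \<in> A"
  by (induction I rule: infinite_finite_induct) (auto simp: subring_zero subring_add)

lemma subring_prod: "subring_of A \<Longrightarrow> (\<And>i. i \<in> I \<Longrightarrow> f i \<in> A) \<Longrightarrow> prod f I \<in> A"
  by (induction I rule: infinite_finite_induct) (auto simp: subring_one subring_mult)

lemma ideal_subset: "ideal_in A I \<Longrightarrow> I \<subseteq> A"
  and ideal_zero: "ideal_in A I \<Longrightarrow> 0 \<in> I"
  and ideal_add: "ideal_in A I \<Longrightarrow> x \<in> I \<Longrightarrow> y \<in> I \<Longrightarrow> x + y \<in> I"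
  and ideal_mult_left: "ideal_in A I \<Longrightarrow> a \<in> A \<Longrightarrow> x \<in> I \<Longrightarrow> a * x \<in> I"
  and ideal_mult_right: "ideal_in A I \<Longrightarrow> a \<in> A \<Longrightarrow> x \<in> I \<Longrightarrow> x * a \<in> I"
  unfolding ideal_in_def by (auto simp: mult.commute)

lemma ideal_uminus: "subring_of A \<Longrightarrow> ideal_in A I \<Longrightarrow> x \<in> I \<Longrightarrow> - x \<in> I"
  using ideal_mult_left[of A I "-1" x] subring_uminus[of A 1] subring_one[of A] by simp

lemma ideal_prod:
  assumes "subring_of A" "ideal_in A I" "finite K" "k \<in> K" "f k \<in> I" "\<And>i. i \<in> K \<Longrightarrow> f i \<in> A"
  shows "prod f K \<in> I"
proof -
  have "prod f K = f k * prod f (K - {k})" using assms(3,4) by (simp add: prod.remove)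
  moreover have "prod f (K - {k}) \<in> A" using assms by (intro subring_prod) auto
  ultimately show ?thesis using ideal_mult_right[OF assms(2)] assms(5) by simp
qed

lemma ideal_eq_if_one_mem: "ideal_in A I \<Longrightarrow> 1 \<in> I \<Longrightarrow> I = A"
  using ideal_mult_right[of A I _ 1] ideal_subset[of A I] by (metis mult_1 subsetI subset_antisym)

lemma ideal_Int_subring:
  assumes I: "ideal_in B I" and A: "subring_of A" "A \<subseteq> B"
  shows "ideal_in A (I \<inter> A)"
  unfolding ideal_in_def
proof (intro conjI ballI)
  show "I \<inter> A \<subseteq> A" "0 \<in> I \<inter> A" using ideal_zero[OF I] subring_zero[OF A(1)] by auto
  show "x + y \<in> I \<inter> A" if "x \<in> I \<inter> A" "y \<in> I \<inter> A" for x y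
    using that ideal_add[OF I] subring_add[OF A(1)] by blast
  show "a * x \<in> I \<inter> A" if "a \<in> A" "x \<in> I \<inter> A" for a x
    using that ideal_mult_left[OF I] subring_mult[OF A(1)] A(2) by blast
qed

lemma prime_ideal: "prime_in A P \<Longrightarrow> ideal_in A P"
  unfolding prime_in_def by blast

lemma prime_mult: "prime_in A P \<Longrightarrow> a \<in> A \<Longrightarrow> b \<in> A \<Longrightarrow> a * b \<in> P \<Longrightarrow> a \<in> P \<or> b \<in> P"
  unfolding prime_in_def by blast

lemma prime_one: "prime_in A P \<Longrightarrow> 1 \<notin> P"
  unfolding prime_in_def using ideal_eq_if_one_mem by blast

lemma prime_zero: "prime_in A P \<Longrightarrow> 0 \<in> P"
  using ideal_zero prime_ideal by blast

lemma prime_subset: "prime_in A P \<Longrightarrow> P \<subseteq> A"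
  using ideal_subset prime_ideal by blast

lemma prime_power: "prime_in A P \<Longrightarrow> subring_of A \<Longrightarrow> a \<in> A \<Longrightarrow> a \<notin> P \<Longrightarrow> a ^ k \<notin> P"
proof (induction k)
  case 0 then show ?case using prime_one by force
next
  case (Suc k)
  then show ?case using prime_mult[of A P a "a ^ k"] subring_power by auto
qed

lemma prime_prod:
  assumes "subring_of A" "prime_in A P" "\<And>i. i \<in> K \<Longrightarrow> f i \<in> A - P"
  shows "prod f K \<in> A - P"
  using assms(3)
proof (induction K rule: infinite_finite_induct)
  case (insert x F)
  then show ?case using prime_mult[OF assms(2), of "f x" "prod f F"] subring_mult[OF assms(1)] by auto
qed (use assms prime_one subring_one in auto)

lemma prime_zero_ideal: "subring_of A \<Longrightarrow> prime_in A {0}"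
  unfolding prime_in_def ideal_in_def using subring_zero subring_one by fastforce

lemma prime_Int_subring:
  assumes "subring_of A" "A \<subseteq> B" "prime_in B Q"
  shows "prime_in A (Q \<inter> A)"
proof -
  have "ideal_in A (Q \<inter> A)" using ideal_Int_subring[OF prime_ideal] assms by blast
  moreover have "Q \<inter> A \<noteq> A" using prime_one[OF assms(3)] subring_one[OF assms(1)] by blast
  moreover have "a \<in> Q \<inter> A \<or> b \<in> Q \<inter> A" if "a \<in> A" "b \<in> A" "a * b \<in> Q \<inter> A" for a b
    using that prime_mult[OF assms(3)] assms(2) by blast
  ultimately show ?thesis unfolding prime_in_def by blast
qed

lemma going_downD:
  assumes "going_down A B" "prime_in A p" "prime_in A q" "p \<subset> q" "prime_in B Q" "Q \<inter> A = q"
  shows "\<exists>P. prime_in B P \<and> P \<subseteq> Q \<and> P \<inter> A = p"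
  using assms unfolding going_down_def by blast

lemma ideal_Union_chain:
  assumes "C \<noteq> {}" "\<And>K. K \<in> C \<Longrightarrow> ideal_in A K \<and> 1 \<notin> K"
    and "\<And>K L. K \<in> C \<Longrightarrow> L \<in> C \<Longrightarrow> K \<subseteq> L \<or> L \<subseteq> K"
  shows "ideal_in A (\<Union>C) \<and> 1 \<notin> \<Union>C"
proof -
  have "x + y \<in> \<Union>C" if xy: "x \<in> \<Union>C" "y \<in> \<Union>C" for x y
  proof -
    obtain K L where KL: "K \<in> C" "L \<in> C" "x \<in> K" "y \<in> L" using xy by auto
    then have "x \<in> K \<union> L" "y \<in> K \<union> L" "K \<union> L \<in> C" using assms(3)[OF KL(1,2)] by (auto simp: Un_absorb1 Un_absorb2)
    then show ?thesis using assms(2) ideal_add by (metis UnionI)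
  qed
  moreover have "a * x \<in> \<Union>C" if "a \<in> A" "x \<in> \<Union>C" for a x
    using that assms(2) ideal_mult_left by blast
  moreover have "\<Union>C \<subseteq> A" "0 \<in> \<Union>C" "1 \<notin> \<Union>C"
    using assms(1,2) ideal_subset ideal_zero by blast+
  ultimately show ?thesis unfolding ideal_in_def by blast
qed

lemma exists_maximal_ideal:
  assumes "subring_of A" "ideal_in A I" "1 \<notin> I"
  shows "\<exists>M. maximal_in A M \<and> I \<subseteq> M"
proof -
  define \<I> where "\<I> = {K. ideal_in A K \<and> 1 \<notin> K \<and> I \<subseteq> K}"
  have "\<exists>U\<in>\<I>. \<forall>X\<in>C. X \<subseteq> U" if C: "C \<in> chains \<I>" for C
  proof (cases "C = {}")
    case True then show ?thesis using assms unfolding \<I>_def by auto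
  next
    case False
    have CI: "C \<subseteq> \<I>" and "\<And>K L. K \<in> C \<Longrightarrow> L \<in> C \<Longrightarrow> K \<subseteq> L \<or> L \<subseteq> K"
      using C unfolding chains_def chain_subset_def by blast+
    then have "ideal_in A (\<Union>C) \<and> 1 \<notin> \<Union>C"
      using ideal_Union_chain[OF False] unfolding \<I>_def by blast
    moreover have "I \<subseteq> \<Union>C" using False CI unfolding \<I>_def by blast
    ultimately have "\<Union>C \<in> \<I>" unfolding \<I>_def by blast
    then show ?thesis by blast
  qed
  then obtain M where M: "M \<in> \<I>" "\<forall>X\<in>\<I>. M \<subseteq> X \<longrightarrow> X = M"
    using Zorn_Lemma2[of \<I>] by blast
  have "K = M \<or> K = A" if K: "ideal_in A K" "M \<subseteq> K" for K
  proof (cases "1 \<in> K")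
    case True then show ?thesis using ideal_eq_if_one_mem K by blast
  next
    case False
    then have "K \<in> \<I>" using K M(1) unfolding \<I>_def by blast
    then show ?thesis using M(2) K by blast
  qed
  moreover have "M \<noteq> A" "ideal_in A M" "I \<subseteq> M"
    using M(1) subring_one[OF assms(1)] unfolding \<I>_def by auto
  ultimately show ?thesis unfolding maximal_in_def by blast
qed

lemma ideal_principal:
  assumes "subring_of A" "a \<in> A"
  shows "ideal_in A {a * t | t. t \<in> A}"
  unfolding ideal_in_def
proof (intro conjI ballI)
  show "{a * t | t. t \<in> A} \<subseteq> A" "0 \<in> {a * t | t. t \<in> A}"
    using assms subring_mult subring_zero by force+
  fix x y assume "x \<in> {a * t | t. t \<in> A}" "y \<in> {a * t | t. t \<in> A}"
  then obtain t u where "x = a * t" "y = a * u" "t \<in> A" "u \<in> A" by blast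
  then have "x + y = a * (t + u)" "t + u \<in> A"
    using subring_add[OF assms(1)] by (auto simp: distrib_left)
  then show "x + y \<in> {a * t | t. t \<in> A}" by blast
next
  fix r x assume "r \<in> A" "x \<in> {a * t | t. t \<in> A}"
  then obtain t where "x = a * t" "t \<in> A" by blast
  moreover have "r * t \<in> A" using subring_mult[OF assms(1) \<open>r \<in> A\<close> \<open>t \<in> A\<close>] .
  ultimately have "r * x = a * (r * t)" "r * t \<in> A" by (simp_all add: ac_simps)
  then show "r * x \<in> {a * t | t. t \<in> A}" by blast
qed

lemma ideal_sum:
  assumes "subring_of A" "ideal_in A I" "ideal_in A K"
  shows "ideal_in A {x + y | x y. x \<in> I \<and> y \<in> K}"
  unfolding ideal_in_def
proof (intro conjI ballI)
  show "{x + y | x y. x \<in> I \<and> y \<in> K} \<subseteq> A"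
    using assms ideal_subset subring_add by blast
  show "0 \<in> {x + y | x y. x \<in> I \<and> y \<in> K}"
    using assms ideal_zero by force
  fix u v assume "u \<in> {x + y | x y. x \<in> I \<and> y \<in> K}" "v \<in> {x + y | x y. x \<in> I \<and> y \<in> K}"
  then obtain a b a' b' where "u = a + b" "v = a' + b'" "a \<in> I" "b \<in> K" "a' \<in> I" "b' \<in> K" by blast
  moreover have "u + v = (a + a') + (b + b')" using calculation by (simp add: algebra_simps)
  ultimately show "u + v \<in> {x + y | x y. x \<in> I \<and> y \<in> K}" using assms ideal_add by blast
next
  fix r u assume "r \<in> A" "u \<in> {x + y | x y. x \<in> I \<and> y \<in> K}"
  then obtain a b where "u = a + b" "a \<in> I" "b \<in> K" by blast
  moreover have "r * u = r * a + r * b" using calculation by (simp add: algebra_simps)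
  ultimately show "r * u \<in> {x + y | x y. x \<in> I \<and> y \<in> K}"
    using assms ideal_mult_left \<open>r \<in> A\<close> by blast
qed

lemma maximal_ideal: "maximal_in A M \<Longrightarrow> ideal_in A M"
  unfolding maximal_in_def by blast

lemma maximal_sum_one:
  assumes "subring_of A" "maximal_in A M" "ideal_in A K" "\<not> K \<subseteq> M"
  shows "1 \<in> {x + y | x y. x \<in> M \<and> y \<in> K}"
proof -
  let ?MK = "{x + y | x y. x \<in> M \<and> y \<in> K}"
  have "M \<subseteq> ?MK" using ideal_zero[OF assms(3)] by force
  moreover have "K \<subseteq> ?MK" using ideal_zero[OF maximal_ideal[OF assms(2)]] by force
  moreover have "ideal_in A ?MK" using ideal_sum[OF assms(1) maximal_ideal[OF assms(2)] assms(3)] .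
  moreover have "\<And>L. ideal_in A L \<Longrightarrow> M \<subseteq> L \<Longrightarrow> L = M \<or> L = A"
    using assms(2) unfolding maximal_in_def by blast
  ultimately have "?MK = A" using assms(4) by blast
  then show ?thesis using subring_one[OF assms(1)] by simp
qed

lemma maximal_imp_prime:
  assumes A: "subring_of A" and M: "maximal_in A M"
  shows "prime_in A M"
proof -
  have "b \<in> M" if ab: "a \<in> A" "b \<in> A" "a * b \<in> M" "a \<notin> M" for a b
  proof -
    have "a \<in> {a * t | t. t \<in> A}" using subring_one[OF A] by force
    then have "\<not> {a * t | t. t \<in> A} \<subseteq> M" using ab(4) by blast
    then obtain x t where xt: "1 = x + a * t" "x \<in> M" "t \<in> A"
      using maximal_sum_one[OF A M ideal_principal[OF A ab(1)]] by blast
    then have "b = x * b + (a * b) * t" by (metis mult.commute mult.left_commute mult_1 distrib_right)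
    moreover have "x * b \<in> M" "(a * b) * t \<in> M"
      using xt ab ideal_mult_right maximal_ideal[OF M] by blast+
    ultimately show "b \<in> M" using ideal_add maximal_ideal[OF M] by metis
  qed
  then show ?thesis using M unfolding maximal_in_def prime_in_def by blast
qed

lemma nonunit_in_maximal:
  assumes A: "subring_of A" and x: "x \<in> A" "inverse x \<notin> A"
  shows "\<exists>M. maximal_in A M \<and> x \<in> M"
proof -
  have "1 \<notin> {x * t | t. t \<in> A}"
  proof
    assume "1 \<in> {x * t | t. t \<in> A}"
    then obtain t where "1 = x * t" "t \<in> A" by blast
    then show False using x(2) by (metis inverse_unique)
  qed
  moreover have "x \<in> {x * t | t. t \<in> A}" using subring_one[OF A] by force
  ultimately show ?thesis using exists_maximal_ideal[OF A ideal_principal[OF A x(1)]] by blast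
qed

lemma local_ring_inverse_mem:
  assumes "subring_of A" "local_ring A" "maximal_in A N" "x \<in> A" "x \<notin> N"
  shows "inverse x \<in> A"
  using nonunit_in_maximal[OF assms(1,4)] assms(2,3,5) unfolding local_ring_def by blast

lemma frac_memI: "a \<in> A \<Longrightarrow> b \<in> A \<Longrightarrow> b \<noteq> 0 \<Longrightarrow> x = a / b \<Longrightarrow> x \<in> Defs.frac A"
  unfolding Defs.frac_def by blast

lemma subset_frac: "subring_of A \<Longrightarrow> A \<subseteq> Defs.frac A"
  using frac_memI[of _ A 1] subring_one by fastforce

lemma frac_mono: "A \<subseteq> B \<Longrightarrow> Defs.frac A \<subseteq> Defs.frac B"
  unfolding Defs.frac_def by blast

lemma inverse_mem_frac: "subring_of A \<Longrightarrow> x \<in> A \<Longrightarrow> inverse x \<in> Defs.frac A"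
  using frac_memI[of 1 A x] subring_one by (cases "x = 0") (auto simp: subring_zero subset_frac[THEN subsetD] divide_inverse)

lemma loc_memI: "a \<in> A \<Longrightarrow> u \<in> M \<Longrightarrow> x = a / u \<Longrightarrow> x \<in> loc A M"
  unfolding loc_def by blast

lemma subset_loc: "multiplicative_in A M \<Longrightarrow> A \<subseteq> loc A M"
  unfolding multiplicative_in_def using loc_memI[of _ A 1 M] by fastforce

lemma inverse_mem_loc: "subring_of A \<Longrightarrow> u \<in> M \<Longrightarrow> inverse u \<in> loc A M"
  by (rule loc_memI[of 1]) (auto simp: subring_one divide_inverse)

lemma subring_loc:
  assumes A: "subring_of A" and M: "multiplicative_in A M"
  shows "subring_of (loc A M)"
proof -
  have MA: "M \<subseteq> A" and M0: "0 \<notin> M" and Mmult: "\<And>u v. u \<in> M \<Longrightarrow> v \<in> M \<Longrightarrow> u * v \<in> M"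
    using M unfolding multiplicative_in_def by auto
  have "x + y \<in> loc A M \<and> x - y \<in> loc A M \<and> x * y \<in> loc A M"
    if xy: "x \<in> loc A M" "y \<in> loc A M" for x y
  proof -
    obtain a u where au: "a \<in> A" "u \<in> M" "x = a / u" using xy(1) unfolding loc_def by blast
    obtain b v where bv: "b \<in> A" "v \<in> M" "y = b / v" using xy(2) unfolding loc_def by blast
    have uv: "u \<noteq> 0" "v \<noteq> 0" "u \<in> A" "v \<in> A" using au bv M0 MA by auto
    have "x + y = (a * v + b * u) / (u * v)" "x - y = (a * v - b * u) / (u * v)"
      "x * y = (a * b) / (u * v)"
      using au bv uv by (simp_all add: field_simps)
    moreover have "a * v + b * u \<in> A" "a * v - b * u \<in> A" "a * b \<in> A"
      using au bv uv A by (auto intro: subring_add subring_diff subring_mult)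
    ultimately show ?thesis using Mmult[OF au(2) bv(2)] loc_memI by blast
  qed
  then show ?thesis using subset_loc[OF M] A unfolding subring_of_def by blast
qed

lemma multiplicative_compl_prime: "subring_of A \<Longrightarrow> prime_in A P \<Longrightarrow> multiplicative_in A (A - P)"
  unfolding multiplicative_in_def
  using prime_zero prime_one prime_mult subring_one subring_mult by fastforce

lemma subring_loc_prime: "subring_of A \<Longrightarrow> prime_in A P \<Longrightarrow> subring_of (loc_prime A P)"
  unfolding loc_prime_def by (intro subring_loc multiplicative_compl_prime)

lemma subset_loc_prime: "subring_of A \<Longrightarrow> prime_in A P \<Longrightarrow> A \<subseteq> loc_prime A P"
  unfolding loc_prime_def by (intro subset_loc multiplicative_compl_prime)

lemma inverse_mem_loc_prime: "subring_of A \<Longrightarrow> u \<in> A \<Longrightarrow> u \<notin> P \<Longrightarrow> inverse u \<in> loc_prime A P"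
  unfolding loc_prime_def by (intro inverse_mem_loc) auto

lemma loc_prime_memI: "a \<in> A \<Longrightarrow> b \<in> A \<Longrightarrow> b \<notin> P \<Longrightarrow> x = a / b \<Longrightarrow> x \<in> loc_prime A P"
  unfolding loc_prime_def by (rule loc_memI) auto

lemma loc_prime_memE:
  assumes "x \<in> loc_prime A P"
  obtains a b where "a \<in> A" "b \<in> A" "b \<notin> P" "x = a / b"
  using assms unfolding loc_prime_def loc_def by blast

lemma inverse_notin_loc_prime:
  assumes "prime_in A P" "s \<in> P" "s \<noteq> 0"
  shows "inverse s \<notin> loc_prime A P"
proof
  assume "inverse s \<in> loc_prime A P"
  then obtain a b where ab: "a \<in> A" "b \<in> A" "b \<notin> P" "inverse s = a / b"
    by (rule loc_prime_memE)
  then have "b = s * a" using prime_zero[OF assms(1)] assms(3) by (auto simp: field_simps)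
  moreover have "s * a \<in> P" using ideal_mult_right[OF prime_ideal[OF assms(1)] ab(1) assms(2)] .
  ultimately show False using ab(3) by simp
qed

lemma loc_prime_nonunitE:
  assumes A: "subring_of A" and y: "y \<in> loc_prime A P" "inverse y \<notin> loc_prime A P"
  obtains a b where "a \<in> P" "b \<in> A" "b \<notin> P" "y = a / b"
proof -
  obtain a b where ab: "a \<in> A" "b \<in> A" "b \<notin> P" "y = a / b" using y(1) by (rule loc_prime_memE)
  have "a \<in> P"
  proof (rule ccontr)
    assume "a \<notin> P"
    then have "b / a \<in> loc_prime A P" using loc_prime_memI[OF ab(2,1)] by blast
    then show False using y(2) ab(4) by simp
  qed
  then show ?thesis using that ab by blast
qed

lemma ringS_rcoset: "I +>\<^bsub>ringS A\<^esub> s = {h + s | h. h \<in> I}"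
  unfolding a_r_coset_def r_coset_def by (auto simp: ringS_def)

lemma ringS_rcoset_eq_iff:
  assumes "subring_of A" "ideal_in A I"
  shows "I +>\<^bsub>ringS A\<^esub> s = I +>\<^bsub>ringS A\<^esub> s' \<longleftrightarrow> s - s' \<in> I"
proof
  assume "I +>\<^bsub>ringS A\<^esub> s = I +>\<^bsub>ringS A\<^esub> s'"
  moreover have "s \<in> I +>\<^bsub>ringS A\<^esub> s" unfolding ringS_rcoset using ideal_zero[OF assms(2)] by force
  ultimately obtain h where "h \<in> I" "s = h + s'" unfolding ringS_rcoset by auto
  then show "s - s' \<in> I" by simp
next
  assume d: "s - s' \<in> I"
  have shift: "h + (s - s') \<in> I" "h + - (s - s') \<in> I" if "h \<in> I" for h
    using that d ideal_add[OF assms(2)] ideal_uminus[OF assms] by blast+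
  show "I +>\<^bsub>ringS A\<^esub> s = I +>\<^bsub>ringS A\<^esub> s'"
  proof (intro equalityI subsetI)
    fix y assume "y \<in> I +>\<^bsub>ringS A\<^esub> s"
    then obtain h where "h \<in> I" "y = (h + (s - s')) + s'" unfolding ringS_rcoset by auto
    then show "y \<in> I +>\<^bsub>ringS A\<^esub> s'" unfolding ringS_rcoset using shift(1) by blast
  next
    fix y assume "y \<in> I +>\<^bsub>ringS A\<^esub> s'"
    then obtain h where "h \<in> I" "y = (h + - (s - s')) + s" unfolding ringS_rcoset by auto
    then show "y \<in> I +>\<^bsub>ringS A\<^esub> s" unfolding ringS_rcoset using shift(2) by blast
  qed
qed

lemma carrier_ringS_Quot: "carrier (ringS A Quot I) = {I +>\<^bsub>ringS A\<^esub> s | s. s \<in> A}"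
  unfolding FactRing_def A_RCOSETS_def RCOSETS_def a_r_coset_def by (auto simp: ringS_def)

lemma one_ringS_Quot: "one (ringS A Quot I) = I +>\<^bsub>ringS A\<^esub> 1"
  unfolding FactRing_def by (simp add: ringS_def)

lemma add_ringS_Quot:
  assumes I: "ideal_in A I"
  shows "add (ringS A Quot I) (I +>\<^bsub>ringS A\<^esub> x) (I +>\<^bsub>ringS A\<^esub> y) = I +>\<^bsub>ringS A\<^esub> (x + y)"
proof -
  have "add (ringS A Quot I) (I +>\<^bsub>ringS A\<^esub> x) (I +>\<^bsub>ringS A\<^esub> y)
      = (\<Union>a\<in>I +>\<^bsub>ringS A\<^esub> x. \<Union>b\<in>I +>\<^bsub>ringS A\<^esub> y. {a + b})"
    unfolding FactRing_def set_add_def set_mult_def by (simp add: ringS_def)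
  also have "\<dots> = I +>\<^bsub>ringS A\<^esub> (x + y)"
  proof (intro equalityI subsetI)
    fix z assume "z \<in> (\<Union>a\<in>I +>\<^bsub>ringS A\<^esub> x. \<Union>b\<in>I +>\<^bsub>ringS A\<^esub> y. {a + b})"
    then obtain h h' where "h \<in> I" "h' \<in> I" "z = (h + h') + (x + y)"
      unfolding ringS_rcoset by (auto simp: algebra_simps)
    then show "z \<in> I +>\<^bsub>ringS A\<^esub> (x + y)" unfolding ringS_rcoset using ideal_add[OF I] by blast
  next
    fix z assume "z \<in> I +>\<^bsub>ringS A\<^esub> (x + y)"
    then obtain h where h: "h \<in> I" "z = (h + x) + (0 + y)" unfolding ringS_rcoset by auto
    then show "z \<in> (\<Union>a\<in>I +>\<^bsub>ringS A\<^esub> x. \<Union>b\<in>I +>\<^bsub>ringS A\<^esub> y. {a + b})"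
      unfolding ringS_rcoset using ideal_zero[OF I] by blast
  qed
  finally show ?thesis .
qed

lemma mult_ringS_Quot:
  assumes A: "subring_of A" and I: "ideal_in A I" and xy: "x \<in> A" "y \<in> A"
  shows "monoid.mult (ringS A Quot I) (I +>\<^bsub>ringS A\<^esub> x) (I +>\<^bsub>ringS A\<^esub> y) = I +>\<^bsub>ringS A\<^esub> (x * y)"
proof -
  have "I +>\<^bsub>ringS A\<^esub> (a * b) = I +>\<^bsub>ringS A\<^esub> (x * y)"
    if ab: "a \<in> I +>\<^bsub>ringS A\<^esub> x" "b \<in> I +>\<^bsub>ringS A\<^esub> y" for a b
  proof -
    obtain h h' where h: "h \<in> I" "h' \<in> I" "a = h + x" "b = h' + y"
      using ab unfolding ringS_rcoset by blast
    then have "a * b - x * y = h * h' + (h * y + x * h')" by (simp add: algebra_simps)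
    moreover have "h * h' \<in> I" "h * y \<in> I" "x * h' \<in> I"
      using h xy ideal_subset[OF I] ideal_mult_left[OF I] ideal_mult_right[OF I] by blast+
    ultimately have "a * b - x * y \<in> I" using ideal_add[OF I] by metis
    then show ?thesis using ringS_rcoset_eq_iff[OF A I] by blast
  qed
  moreover have "x \<in> I +>\<^bsub>ringS A\<^esub> x" "y \<in> I +>\<^bsub>ringS A\<^esub> y"
    unfolding ringS_rcoset using ideal_zero[OF I] by force+
  moreover have "monoid.mult (ringS A Quot I) (I +>\<^bsub>ringS A\<^esub> x) (I +>\<^bsub>ringS A\<^esub> y)
      = (\<Union>a\<in>I +>\<^bsub>ringS A\<^esub> x. \<Union>b\<in>I +>\<^bsub>ringS A\<^esub> y. I +>\<^bsub>ringS A\<^esub> (a * b))"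
    unfolding FactRing_def rcoset_mult_def by (simp add: ringS_def)
  ultimately show ?thesis by blast
qed

lemma integral_over_mono: "A \<subseteq> B \<Longrightarrow> integral_over A x \<Longrightarrow> integral_over B x"
  unfolding integral_over_def by blast

text \<open>If \<open>x\<close> is integral over \<open>A\<close> and \<open>1/x \<in> A\<close>, multiplying an equation of integral dependence
  of degree \<open>k + 1\<close> by \<open>(1/x)\<^sup>k\<close> expresses \<open>x\<close> as a polynomial in \<open>1/x\<close>.\<close>
lemma integral_over_inverse_mem:
  assumes A: "subring_of A" and y: "y \<in> A" "y * x = 1" and x: "integral_over A x"
  shows "x \<in> A"
proof -
  obtain k c where c: "\<And>i. i < k \<Longrightarrow> c i \<in> A" and eq: "x ^ k + (\<Sum>i<k. c i * x ^ i) = 0"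
    using x unfolding integral_over_def by blast
  show ?thesis
  proof (cases k)
    case 0 then show ?thesis using eq by simp
  next
    case (Suc k')
    have pw: "x ^ i * y ^ k' = y ^ (k' - i)" if "i \<le> k'" for i
    proof -
      have "x ^ i * y ^ k' = (y * x) ^ i * y ^ (k' - i)"
        using that by (simp add: power_add[symmetric] power_mult_distrib algebra_simps)
      then show ?thesis using y by simp
    qed
    have "0 = (x ^ k + (\<Sum>i<k. c i * x ^ i)) * y ^ k'" using eq by simp
    also have "\<dots> = x ^ k * y ^ k' + (\<Sum>i<k. c i * (x ^ i * y ^ k'))"
      by (simp add: distrib_right sum_distrib_right mult.assoc)
    also have "\<dots> = x + (\<Sum>i<k. c i * y ^ (k' - i))"
      using pw Suc by (simp add: mult.assoc)
    finally have "x = - (\<Sum>i<k. c i * y ^ (k' - i))" by (simp add: eq_neg_iff_add_eq_0 add.commute)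
    moreover have "(\<Sum>i<k. c i * y ^ (k' - i)) \<in> A"
      using c y A by (intro subring_sum) (auto intro: subring_mult subring_power)
    ultimately show ?thesis using subring_uminus[OF A] by simp
  qed
qed

lemma coeff_prod_mem:
  assumes A: "subring_of A" and p: "\<And>j i. j \<in> K \<Longrightarrow> coeff (f j) i \<in> A"
  shows "coeff (prod f K) k \<in> A"
  using p
proof (induction K arbitrary: k rule: infinite_finite_induct)
  case (insert x F)
  then show ?case
    unfolding prod.insert[OF insert(1,2)] coeff_mult using A
    by (auto intro!: subring_sum subring_mult)
qed (use subring_zero[OF A] subring_one[OF A] in \<open>simp_all add: coeff_1\<close>)

lemma integral_overI_monic:
  assumes "\<And>i. coeff p i \<in> A" "lead_coeff p = 1" "poly p x = 0"
  shows "integral_over A x"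
proof -
  have "poly p x = (\<Sum>i<Suc (degree p). coeff p i * x ^ i)"
    unfolding poly_altdef by (simp add: lessThan_Suc_atMost)
  also have "\<dots> = x ^ degree p + (\<Sum>i<degree p. coeff p i * x ^ i)" using assms(2) by simp
  finally show ?thesis
    unfolding integral_over_def using assms(1,3) by (intro exI[of _ "degree p"] exI[of _ "coeff p"]) auto
qed

section \<open>Valuation domains and generalized Krull domains\<close>

lemma valuation_domain_subring: "valuation_domain V \<Longrightarrow> subring_of V"
  unfolding valuation_domain_def by blast

lemma valuation_domain_div_cases:
  assumes V: "valuation_domain V" and ab: "a \<in> V" "b \<in> V" "a \<noteq> 0" "b \<noteq> 0"
  shows "a / b \<in> V \<or> b / a \<in> V"
proof -
  have "a / b \<in> Defs.frac V" "a / b \<noteq> 0" using ab by (auto intro: frac_memI)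
  then show ?thesis using V unfolding valuation_domain_def by fastforce
qed

definition divisible_by_powers :: "'a::field set \<Rightarrow> 'a \<Rightarrow> 'a set" where
  "divisible_by_powers V y = {x \<in> V. \<forall>N. \<exists>v\<in>V. x = y ^ N * v}"

lemma ideal_divisible_by_powers:
  assumes V: "subring_of V"
  shows "ideal_in V (divisible_by_powers V y)"
  unfolding ideal_in_def
proof (intro conjI ballI)
  show "divisible_by_powers V y \<subseteq> V" "0 \<in> divisible_by_powers V y"
    unfolding divisible_by_powers_def using subring_zero[OF V] by auto
  fix a b assume ab: "a \<in> divisible_by_powers V y" "b \<in> divisible_by_powers V y"
  have "\<exists>v\<in>V. a + b = y ^ N * v" for N
  proof -
    obtain v v' where "v \<in> V" "v' \<in> V" "a = y ^ N * v" "b = y ^ N * v'"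
      using ab unfolding divisible_by_powers_def by blast
    then have "a + b = y ^ N * (v + v')" "v + v' \<in> V" using subring_add[OF V] by (auto simp: distrib_left)
    then show ?thesis by blast
  qed
  then show "a + b \<in> divisible_by_powers V y"
    using subring_add[OF V] ab unfolding divisible_by_powers_def by blast
next
  fix r a assume ra: "r \<in> V" "a \<in> divisible_by_powers V y"
  have "\<exists>v\<in>V. r * a = y ^ N * v" for N
  proof -
    obtain v where "v \<in> V" "a = y ^ N * v" using ra(2) unfolding divisible_by_powers_def by blast
    moreover have "r * v \<in> V" using subring_mult[OF V ra(1) \<open>v \<in> V\<close>] .
    ultimately show ?thesis by (intro bexI[of _ "r * v"]) (simp_all add: ac_simps)
  qed
  then show "r * a \<in> divisible_by_powers V y"
    using subring_mult[OF V] ra unfolding divisible_by_powers_def by blast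
qed

lemma one_notin_divisible_by_powers:
  assumes "inverse y \<notin> V"
  shows "1 \<notin> divisible_by_powers V y"
proof
  assume "1 \<in> divisible_by_powers V y"
  then obtain v where "v \<in> V" "1 = y ^ 1 * v" unfolding divisible_by_powers_def by blast
  then show False using assms inverse_unique[of y v] by auto
qed

lemma valuation_domain_divides_power:
  assumes V: "valuation_domain V" and y: "y \<in> V" "y \<noteq> 0"
    and x: "x \<in> V" "x \<notin> divisible_by_powers V y"
  shows "\<exists>N u. u \<in> V \<and> y ^ N = x * u"
proof -
  obtain N where N: "\<not> (\<exists>v\<in>V. x = y ^ N * v)" using x unfolding divisible_by_powers_def by blast
  have pow: "y ^ N \<in> V" "y ^ N \<noteq> 0" using subring_power[OF valuation_domain_subring[OF V] y(1)] y(2) by auto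
  have "x \<noteq> 0" using N subring_zero[OF valuation_domain_subring[OF V]] by force
  moreover have "x = y ^ N * (x / y ^ N)" using pow(2) by simp
  then have "x / y ^ N \<notin> V" using N by blast
  ultimately have "y ^ N / x \<in> V" using valuation_domain_div_cases[OF V x(1) pow(1)] pow(2) by blast
  then show ?thesis using \<open>x \<noteq> 0\<close> by (intro exI[of _ N] exI[of _ "y ^ N / x"]) simp
qed

lemma prime_divisible_by_powers:
  assumes V: "valuation_domain V" and y: "y \<in> V" "y \<noteq> 0" "inverse y \<notin> V"
  shows "prime_in V (divisible_by_powers V y)"
proof -
  have subV: "subring_of V" using valuation_domain_subring[OF V] .
  have "a \<in> divisible_by_powers V y \<or> b \<in> divisible_by_powers V y"
    if ab: "a \<in> V" "b \<in> V" "a * b \<in> divisible_by_powers V y" for a b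
  proof (rule ccontr)
    assume "\<not> (a \<in> divisible_by_powers V y \<or> b \<in> divisible_by_powers V y)"
    then obtain A B u u' where A: "u \<in> V" "y ^ A = a * u" and B: "u' \<in> V" "y ^ B = b * u'"
      using valuation_domain_divides_power[OF V y(1,2)] ab(1,2) by meson
    obtain v where v: "v \<in> V" "a * b = y ^ (A + B + 1) * v"
      using ab(3) unfolding divisible_by_powers_def by blast
    have "y ^ (A + B) * 1 = (a * b) * (u * u')" using A B by (simp add: power_add algebra_simps)
    also have "\<dots> = y ^ (A + B) * (y * (v * u * u'))" using v by (simp add: algebra_simps)
    finally have "y * (v * u * u') = 1" using y(2) by simp
    then have "inverse y = v * u * u'" by (rule inverse_unique)
    then show False using subring_mult[OF subV] A B v y(3) by metis
  qed
  then show ?thesis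
    using ideal_divisible_by_powers[OF subV] one_notin_divisible_by_powers[OF y(3)] subring_one[OF subV]
    unfolding prime_in_def by blast
qed

lemma height_one_prime: "height_one A q \<Longrightarrow> prime_in A q"
  unfolding height_one_def by blast

lemma height_one_nonzero:
  assumes "height_one A q"
  obtains w where "w \<in> q" "w \<noteq> 0"
proof -
  obtain Q where "prime_in A Q" "Q \<subset> q" using assms unfolding height_one_def by blast
  then show ?thesis using that prime_zero by blast
qed

lemma loc_prime_proper_ideal_Int:
  assumes S: "subring_of S" "prime_in S q" and I: "ideal_in (loc_prime S q) I" "1 \<notin> I"
  shows "I \<inter> S \<subseteq> q"
proof
  fix a assume a: "a \<in> I \<inter> S"
  show "a \<in> q"
  proof (rule ccontr)
    assume "a \<notin> q"
    then have "inverse a * a \<in> I"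
      using inverse_mem_loc_prime[OF S(1)] a ideal_mult_left[OF I(1)] by blast
    moreover have "a \<noteq> 0" using \<open>a \<notin> q\<close> prime_zero[OF S(2)] by auto
    ultimately show False using I(2) by simp
  qed
qed

text \<open>Otherwise the contraction to \<open>S\<close> would be a prime strictly between \<open>0\<close> and \<open>q\<close>.\<close>
lemma height_one_divisible_by_powers_Int:
  assumes S: "subring_of S" and h: "height_one S q" and V: "valuation_domain (loc_prime S q)"
    and y: "y \<in> loc_prime S q" "y \<noteq> 0" "inverse y \<notin> loc_prime S q"
  shows "divisible_by_powers (loc_prime S q) y \<inter> S = {0}"
proof (rule ccontr)
  define V where "V = loc_prime S q"
  define I where "I = divisible_by_powers V y"
  assume "divisible_by_powers (loc_prime S q) y \<inter> S \<noteq> {0}"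
  then have "I \<inter> S \<noteq> {0}" unfolding I_def V_def .
  have qp: "prime_in S q" using height_one_prime[OF h] .
  have SV: "S \<subseteq> V" unfolding V_def using subset_loc_prime[OF S qp] .
  have Ip: "prime_in V I" unfolding I_def V_def using prime_divisible_by_powers[OF V y] .
  have I'p: "prime_in S (I \<inter> S)" using prime_Int_subring[OF S SV Ip] .
  have "I \<inter> S \<subseteq> q"
    using loc_prime_proper_ideal_Int[OF S qp] prime_ideal[OF Ip] prime_one[OF Ip] unfolding V_def by blast
  moreover have "\<not> q \<subseteq> I \<inter> S"
  proof
    assume qI: "q \<subseteq> I \<inter> S"
    obtain a b where ab: "a \<in> q" "b \<in> S" "b \<notin> q" "y = a / b"
      using S y(1,3) by (rule loc_prime_nonunitE)
    have "inverse b * a \<in> I"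
      using ab(1) qI inverse_mem_loc_prime[OF S ab(2,3)] ideal_mult_left[OF prime_ideal[OF Ip]]
      unfolding V_def by blast
    moreover have "y = inverse b * a" using ab(4) by (simp add: divide_inverse)
    ultimately obtain v where "v \<in> V" "y = y ^ 2 * v" unfolding I_def divisible_by_powers_def by blast
    then have "y * v = 1" using y(2) by (simp add: power2_eq_square)
    then have "inverse y = v" by (rule inverse_unique)
    then show False using \<open>v \<in> V\<close> y(3) unfolding V_def by simp
  qed
  moreover have "0 \<in> I \<inter> S" using prime_zero[OF I'p] .
  ultimately have "{0} \<subset> I \<inter> S" "I \<inter> S \<subset> q" using \<open>I \<inter> S \<noteq> {0}\<close> by blast+
  then have "height_ge2 S q"
    unfolding height_ge2_def using prime_zero_ideal[OF S] I'p by blast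
  then show False using h unfolding height_one_def by blast
qed

lemma height_one_power_divisible:
  assumes S: "subring_of S" and h: "height_one S q" and V: "valuation_domain (loc_prime S q)"
    and y: "y \<in> loc_prime S q" "y \<noteq> 0" "inverse y \<notin> loc_prime S q"
    and w: "w \<in> loc_prime S q" "w \<noteq> 0"
  shows "\<exists>N v. v \<in> loc_prime S q \<and> y ^ N = w * v"
proof -
  have qp: "prime_in S q" using height_one_prime[OF h] .
  obtain a b where ab: "a \<in> S" "b \<in> S" "b \<notin> q" "w = a / b" using w(1) by (rule loc_prime_memE)
  have "w \<notin> divisible_by_powers (loc_prime S q) y"
  proof
    assume "w \<in> divisible_by_powers (loc_prime S q) y"
    moreover have "b \<in> loc_prime S q" using subset_loc_prime[OF S qp] ab(2) by blast
    ultimately have "b * w \<in> divisible_by_powers (loc_prime S q) y"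
      using ideal_mult_left[OF ideal_divisible_by_powers[OF subring_loc_prime[OF S qp]]] by blast
    moreover have "b \<noteq> 0" using ab(3) prime_zero[OF qp] by auto
    then have "b * w = a" using ab(4) by simp
    ultimately have "a = 0" using height_one_divisible_by_powers_Int[OF S h V y] ab(1) by blast
    then show False using ab(4) w(2) by simp
  qed
  then show ?thesis using valuation_domain_divides_power[OF V y(1,2) w(1)] by blast
qed

lemma height_one_power_mult_mem:
  assumes S: "subring_of S" and h: "height_one S q" and V: "valuation_domain (loc_prime S q)"
    and s: "s \<in> q" "s \<noteq> 0" and x: "x \<in> Defs.frac S" "x \<noteq> 0"
  shows "\<exists>N. s ^ N * x \<in> loc_prime S q"
proof (cases "x \<in> loc_prime S q")
  case True then show ?thesis by (intro exI[of _ 0]) simp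
next
  case False
  have qp: "prime_in S q" using height_one_prime[OF h] .
  have SV: "S \<subseteq> loc_prime S q" using subset_loc_prime[OF S qp] .
  have "x \<in> Defs.frac (loc_prime S q)" using x frac_mono[OF SV] by blast
  then have "inverse x \<in> loc_prime S q" using False V x(2) unfolding valuation_domain_def by blast
  moreover have "s \<in> loc_prime S q" using s(1) prime_subset[OF qp] SV by blast
  moreover have "inverse x \<noteq> 0" using x(2) by simp
  ultimately obtain N v where "v \<in> loc_prime S q" "s ^ N = inverse x * v"
    using height_one_power_divisible[OF S h V _ s(2) inverse_notin_loc_prime[OF qp s]] by blast
  then have "s ^ N * x = v" using x(2) by simp
  then show ?thesis using \<open>v \<in> loc_prime S q\<close> by blast
qed

lemma gen_krull_subring: "gen_krull S \<Longrightarrow> subring_of S"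
  unfolding gen_krull_def by blast

lemma gen_krull_valuation: "gen_krull S \<Longrightarrow> height_one S P \<Longrightarrow> valuation_domain (loc_prime S P)"
  unfolding gen_krull_def R1_def by blast

lemma gen_krull_memI:
  assumes "gen_krull S" "x \<in> Defs.frac S" "\<And>P. height_one S P \<Longrightarrow> x \<in> loc_prime S P"
  shows "x \<in> S"
proof -
  have "S = Defs.frac S \<inter> \<Inter>{loc_prime S P | P. height_one S P}"
    using assms(1) unfolding gen_krull_def by blast
  then show ?thesis using assms(2,3) by blast
qed

text \<open>Only the finitely many height-one primes containing a denominator of \<open>x\<close> and not contained
  in \<open>q\<close> need a correction, and each one is dealt with by a power of an element outside \<open>q\<close>.\<close>
lemma gen_krull_multiplier:
  assumes gk: "gen_krull S" and qp: "prime_in S q" and x: "x \<in> Defs.frac S" "x \<noteq> 0"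
    and hyp: "\<And>P. height_one S P \<Longrightarrow> P \<subseteq> q \<Longrightarrow> x \<in> loc_prime S P"
  obtains U where "U \<in> S - q" "\<And>P. height_one S P \<Longrightarrow> U * x \<in> loc_prime S P"
proof -
  have S: "subring_of S" using gen_krull_subring[OF gk] .
  obtain a b where ab: "a \<in> S" "b \<in> S" "b \<noteq> 0" "x = a / b" using x unfolding Defs.frac_def by blast
  define B where "B = {P. height_one S P \<and> b \<in> P \<and> \<not> P \<subseteq> q}"
  have "finite B"
    using gk ab(2,3) unfolding B_def gen_krull_def by (auto elim: finite_subset[rotated])
  have "\<exists>u. u \<in> S - q \<and> u * x \<in> loc_prime S P" if P: "P \<in> B" for P
  proof -
    have h: "height_one S P" and "\<not> P \<subseteq> q" using P unfolding B_def by auto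
    then obtain s where s: "s \<in> P" "s \<notin> q" by blast
    have "s \<noteq> 0" "s \<in> S" using s prime_zero[OF qp] prime_subset[OF height_one_prime[OF h]] by auto
    then obtain N where "s ^ N * x \<in> loc_prime S P"
      using height_one_power_mult_mem[OF S h gen_krull_valuation[OF gk h] s(1) _ x] by blast
    moreover have "s ^ N \<in> S - q" using subring_power[OF S] prime_power[OF qp S] s \<open>s \<in> S\<close> by blast
    ultimately show ?thesis by blast
  qed
  then obtain u where u: "\<And>P. P \<in> B \<Longrightarrow> u P \<in> S - q" "\<And>P. P \<in> B \<Longrightarrow> u P * x \<in> loc_prime S P"
    by metis
  have "prod u B * x \<in> loc_prime S P" if h: "height_one S P" for P
  proof -
    have Pp: "prime_in S P" using height_one_prime[OF h] .
    note subV = subring_loc_prime[OF S Pp] and SV = subset_loc_prime[OF S Pp]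
    show ?thesis
    proof (cases "P \<in> B")
      case True
      have eq: "prod u B * x = (u P * x) * prod u (B - {P})"
        using \<open>finite B\<close> True by (simp add: prod.remove ac_simps)
      have "prod u (B - {P}) \<in> S" using u(1) by (intro subring_prod[OF S]) auto
      then show ?thesis unfolding eq using subring_mult[OF subV u(2)[OF True]] SV by blast
    next
      case False
      then have "x \<in> loc_prime S P"
        using hyp[OF h] loc_prime_memI[OF ab(1,2) _ ab(4)] h unfolding B_def by blast
      moreover have "prod u B \<in> S" using u(1) by (intro subring_prod[OF S]) auto
      ultimately show ?thesis using subring_mult[OF subV] SV by blast
    qed
  qed
  moreover have "prod u B \<in> S - q" using prime_prod[OF S qp u(1)] .
  ultimately show ?thesis using that by blast
qed

lemma gen_krull_loc_prime_memI:
  assumes gk: "gen_krull S" and qp: "prime_in S q" and x: "x \<in> Defs.frac S"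
    and hyp: "\<And>P. height_one S P \<Longrightarrow> P \<subseteq> q \<Longrightarrow> x \<in> loc_prime S P"
  shows "x \<in> loc_prime S q"
proof (cases "x = 0")
  case True
  then show ?thesis using subset_loc_prime[OF gen_krull_subring[OF gk] qp] subring_zero gk
    unfolding gen_krull_def by blast
next
  case False
  obtain U where U: "U \<in> S - q" "\<And>P. height_one S P \<Longrightarrow> U * x \<in> loc_prime S P"
    using gen_krull_multiplier[OF gk qp x False hyp] by blast
  obtain a b where ab: "a \<in> S" "b \<in> S" "b \<noteq> 0" "x = a / b" using x unfolding Defs.frac_def by blast
  have "U * x \<in> Defs.frac S"
    using U(1) ab subring_mult[OF gen_krull_subring[OF gk]] by (intro frac_memI[of "U * a" S b]) auto
  then have "U * x \<in> S" using gen_krull_memI[OF gk] U(2) by blast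
  moreover have "x = (U * x) / U" using U(1) prime_zero[OF qp] by auto
  ultimately show ?thesis using loc_prime_memI U(1) by blast
qed

lemma gen_krull_integral_mem:
  assumes gk: "gen_krull S" and x: "x \<in> Defs.frac S" "integral_over S x"
  shows "x \<in> S"
proof (rule gen_krull_memI[OF gk x(1)])
  fix P assume h: "height_one S P"
  define V where "V = loc_prime S P"
  have V: "valuation_domain V" using gen_krull_valuation[OF gk h] unfolding V_def .
  have SV: "S \<subseteq> V" using subset_loc_prime[OF gen_krull_subring[OF gk] height_one_prime[OF h]]
    unfolding V_def .
  show "x \<in> loc_prime S P"
  proof (cases "x = 0")
    case True then show ?thesis using SV subring_zero[OF gen_krull_subring[OF gk]] V_def by auto
  next
    case False
    moreover have "x \<in> Defs.frac V" using x(1) frac_mono[OF SV] by blast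
    ultimately have "x \<in> V \<or> inverse x \<in> V" using V unfolding valuation_domain_def by blast
    moreover have "x \<in> V" if "inverse x \<in> V"
      using integral_over_inverse_mem[OF valuation_domain_subring[OF V] that _ integral_over_mono[OF SV x(2)]]
        False by simp
    ultimately show ?thesis unfolding V_def by blast
  qed
qed

section \<open>The pullback ring\<close>

locale semilocal_pullback =
  fixes S :: "'a::field set" and n :: nat and m :: "nat \<Rightarrow> 'a set"
    and \<alpha> :: "nat \<Rightarrow> 'b::field \<Rightarrow> 'a set"
  assumes gen_krull: "gen_krull S"
    and two_le_n: "n \<ge> 2"
    and inj_m: "inj_on m {..<n}"
    and maximal_ideals: "{M. maximal_in S M} = m ` {..<n}"
    and height_m: "\<forall>j<n. height_ge2 S (m j)"
    and residue_iso: "\<forall>i<n. \<alpha> i \<in> ring_iso (ringS (UNIV :: 'b set)) (ringS S Quot m i)"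
begin

abbreviation R where "R \<equiv> pullback_ring S n m \<alpha>"

lemma subring_S: "subring_of S"
  using gen_krull gen_krull_subring by blast

lemma maximal_iff: "maximal_in S M \<longleftrightarrow> (\<exists>i<n. M = m i)"
  using maximal_ideals by blast

lemma maximal_m: "i < n \<Longrightarrow> maximal_in S (m i)"
  using maximal_iff by blast

lemma ideal_m: "i < n \<Longrightarrow> ideal_in S (m i)"
  using maximal_ideal maximal_m by blast

lemma prime_m: "i < n \<Longrightarrow> prime_in S (m i)"
  using maximal_imp_prime[OF subring_S maximal_m] .

lemma m_subset: "i < n \<Longrightarrow> m i \<subseteq> S"
  using ideal_subset[OF ideal_m] .

lemma inverse_mem_S: "s \<in> S \<Longrightarrow> (\<And>i. i < n \<Longrightarrow> s \<notin> m i) \<Longrightarrow> inverse s \<in> S"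
  using nonunit_in_maximal[OF subring_S] maximal_iff by blast

definition residue :: "nat \<Rightarrow> 'a \<Rightarrow> 'b" where
  "residue i s = (THE c. \<alpha> i c = m i +>\<^bsub>ringS S\<^esub> s)"

lemma alpha_bij: "i < n \<Longrightarrow> bij_betw (\<alpha> i) UNIV (carrier (ringS S Quot m i))"
  using residue_iso unfolding ring_iso_def by (auto simp: ringS_def)

lemma alpha_hom:
  assumes "i < n"
  shows "\<alpha> i (c + d) = add (ringS S Quot m i) (\<alpha> i c) (\<alpha> i d)"
    and "\<alpha> i (c * d) = monoid.mult (ringS S Quot m i) (\<alpha> i c) (\<alpha> i d)"
    and "\<alpha> i 1 = one (ringS S Quot m i)"
  using assms residue_iso unfolding ring_iso_def ring_hom_def by (auto simp: ringS_def)

lemma residue_unique: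
  assumes i: "i < n" and s: "s \<in> S"
  shows "\<alpha> i c = m i +>\<^bsub>ringS S\<^esub> s \<longleftrightarrow> residue i s = c"
proof -
  have "m i +>\<^bsub>ringS S\<^esub> s \<in> carrier (ringS S Quot m i)" using s unfolding carrier_ringS_Quot by blast
  then have "\<exists>!c. \<alpha> i c = m i +>\<^bsub>ringS S\<^esub> s"
    using alpha_bij[OF i] unfolding bij_betw_def inj_on_def by (metis UNIV_I imageE)
  then show ?thesis unfolding residue_def by (metis (mono_tags, lifting) the_equality)
qed

lemma alpha_residue: "i < n \<Longrightarrow> s \<in> S \<Longrightarrow> \<alpha> i (residue i s) = m i +>\<^bsub>ringS S\<^esub> s"
  using residue_unique by blast

lemma residue_add: "i < n \<Longrightarrow> x \<in> S \<Longrightarrow> y \<in> S \<Longrightarrow> residue i (x + y) = residue i x + residue i y"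
  by (rule residue_unique[THEN iffD1])
    (simp_all add: alpha_hom alpha_residue add_ringS_Quot[OF ideal_m] subring_add[OF subring_S])

lemma residue_mult: "i < n \<Longrightarrow> x \<in> S \<Longrightarrow> y \<in> S \<Longrightarrow> residue i (x * y) = residue i x * residue i y"
  by (rule residue_unique[THEN iffD1])
    (simp_all add: alpha_hom alpha_residue mult_ringS_Quot[OF subring_S ideal_m] subring_mult[OF subring_S])

lemma residue_one: "i < n \<Longrightarrow> residue i 1 = 1"
  by (rule residue_unique[THEN iffD1]) (simp_all add: alpha_hom one_ringS_Quot subring_one[OF subring_S])

lemma residue_zero: "i < n \<Longrightarrow> residue i 0 = 0"
  using residue_add[of i 0 0] subring_zero[OF subring_S] by (metis add_0 add_cancel_right_right)

lemma residue_diff: "i < n \<Longrightarrow> x \<in> S \<Longrightarrow> y \<in> S \<Longrightarrow> residue i (x - y) = residue i x - residue i y"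
  using residue_add[of i "x - y" y] subring_diff[OF subring_S] by (simp add: algebra_simps)

lemma residue_eq_iff:
  assumes "i < n" "x \<in> S" "y \<in> S"
  shows "residue i x = residue i y \<longleftrightarrow> x - y \<in> m i"
proof -
  have "residue i x = residue i y \<longleftrightarrow> m i +>\<^bsub>ringS S\<^esub> x = m i +>\<^bsub>ringS S\<^esub> y"
    using residue_unique[OF assms(1,2)] alpha_residue[OF assms(1,3)] by auto
  then show ?thesis using ringS_rcoset_eq_iff[OF subring_S ideal_m[OF assms(1)]] by simp
qed

lemma residue_eq_zero_iff: "i < n \<Longrightarrow> x \<in> S \<Longrightarrow> residue i x = 0 \<longleftrightarrow> x \<in> m i"
  using residue_eq_iff[of i x 0] residue_zero subring_zero[OF subring_S] by simp

lemma residue_surj: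
  assumes i: "i < n"
  shows "\<exists>s\<in>S. residue i s = c"
proof -
  have "\<alpha> i c \<in> carrier (ringS S Quot m i)" using alpha_bij[OF i] unfolding bij_betw_def by blast
  then obtain s where "s \<in> S" "\<alpha> i c = m i +>\<^bsub>ringS S\<^esub> s" unfolding carrier_ringS_Quot by blast
  then show ?thesis using residue_unique[OF i] by blast
qed

lemma residue_prod:
  "i < n \<Longrightarrow> (\<And>k. k \<in> K \<Longrightarrow> f k \<in> S) \<Longrightarrow> residue i (prod f K) = (\<Prod>k\<in>K. residue i (f k))"
  by (induction K rule: infinite_finite_induct)
    (auto simp: residue_one residue_mult subring_prod[OF subring_S])

lemma residue_sum:
  "i < n \<Longrightarrow> (\<And>k. k \<in> K \<Longrightarrow> f k \<in> S) \<Longrightarrow> residue i (sum f K) = (\<Sum>k\<in>K. residue i (f k))"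
  by (induction K rule: infinite_finite_induct)
    (auto simp: residue_zero residue_add subring_sum[OF subring_S])

lemma pullback_ring_eq: "R = {s \<in> S. \<exists>c. \<forall>i<n. residue i s = c}"
proof -
  have "(\<forall>i<n. m i +>\<^bsub>ringS S\<^esub> s = \<alpha> i c) \<longleftrightarrow> (\<forall>i<n. residue i s = c)" if "s \<in> S" for s c
    using residue_unique[OF _ that] by metis
  then show ?thesis unfolding pullback_ring_def by auto
qed

lemma R_memI: "s \<in> S \<Longrightarrow> (\<And>i. i < n \<Longrightarrow> residue i s = c) \<Longrightarrow> s \<in> R"
  unfolding pullback_ring_eq by blast

lemma R_memD: "s \<in> R \<Longrightarrow> s \<in> S \<and> (\<exists>c. \<forall>i<n. residue i s = c)"
  unfolding pullback_ring_eq by blast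

lemma R_subset_S: "R \<subseteq> S"
  unfolding pullback_ring_eq by blast

lemma comaximal:
  assumes "i < n" "j < n" "i \<noteq> j"
  shows "\<exists>a\<in>m i. \<exists>b\<in>m j. 1 = a + b"
proof -
  have "\<not> m j \<subseteq> m i"
  proof
    assume "m j \<subseteq> m i"
    then have "m i = m j \<or> m i = S"
      using maximal_m[OF assms(2)] ideal_m[OF assms(1)] unfolding maximal_in_def by blast
    then show False
      using inj_m assms maximal_m[OF assms(1)] unfolding inj_on_def maximal_in_def by blast
  qed
  then show ?thesis using maximal_sum_one[OF subring_S maximal_m ideal_m] assms by blast
qed

lemma exists_residue_indicator:
  assumes i: "i < n"
  shows "\<exists>e\<in>S. residue i e = 1 \<and> (\<forall>j<n. j \<noteq> i \<longrightarrow> residue j e = 0)"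
proof -
  have "\<exists>b. b \<in> m j \<and> 1 - b \<in> m i" if j: "j \<in> {..<n} - {i}" for j
  proof -
    obtain a b where "a \<in> m i" "b \<in> m j" "1 = a + b" using comaximal[OF i, of j] j by auto
    moreover have "1 - b = a" using \<open>1 = a + b\<close> by (metis add_diff_cancel_right')
    ultimately show ?thesis by auto
  qed
  then obtain b where b: "\<And>j. j \<in> {..<n} - {i} \<Longrightarrow> b j \<in> m j \<and> 1 - b j \<in> m i" by metis
  have bS: "j \<in> {..<n} - {i} \<Longrightarrow> b j \<in> S" for j using b m_subset by blast
  define e where "e = prod b ({..<n} - {i})"
  have eS: "e \<in> S" unfolding e_def using bS by (intro subring_prod[OF subring_S])
  have "residue i (b j) = 1" if j: "j \<in> {..<n} - {i}" for j
    using residue_eq_iff[OF i subring_one[OF subring_S] bS[OF j]] b[OF j] residue_one[OF i] by simp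
  then have "residue i e = (\<Prod>j\<in>{..<n} - {i}. 1)"
    unfolding e_def using residue_prod[OF i, of _ b] bS by (metis (no_types, lifting) prod.cong)
  then have "residue i e = 1" by simp
  moreover have "residue j e = 0" if j: "j < n" "j \<noteq> i" for j
  proof -
    have "e \<in> m j" unfolding e_def using j b bS
      by (intro ideal_prod[OF subring_S ideal_m[OF j(1)], of _ j]) auto
    then show ?thesis using residue_eq_zero_iff[OF j(1) eS] by blast
  qed
  ultimately show ?thesis using eS by blast
qed

lemma exists_R_residue: "\<exists>t\<in>R. \<forall>i<n. residue i t = c"
proof -
  have "\<forall>i\<in>{..<n}. \<exists>e. e \<in> S \<and> residue i e = 1 \<and> (\<forall>j<n. j \<noteq> i \<longrightarrow> residue j e = 0)"
    using exists_residue_indicator by blast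
  then obtain e where e: "\<forall>i\<in>{..<n}. e i \<in> S \<and> residue i (e i) = 1 \<and> (\<forall>j<n. j \<noteq> i \<longrightarrow> residue j (e i) = 0)"
    by (metis bchoice)
  have "\<forall>i\<in>{..<n}. \<exists>s. s \<in> S \<and> residue i s = c" using residue_surj by blast
  then obtain s where s: "\<forall>i\<in>{..<n}. s i \<in> S \<and> residue i (s i) = c" by (metis bchoice)
  define t where "t = (\<Sum>i<n. e i * s i)"
  have es: "e i * s i \<in> S" if "i < n" for i using e s that subring_mult[OF subring_S] by blast
  have tS: "t \<in> S" unfolding t_def using es by (intro subring_sum[OF subring_S]) auto
  have "residue j t = c" if j: "j < n" for j
  proof -
    have "residue j t = (\<Sum>i<n. residue j (e i * s i))"
      unfolding t_def using residue_sum[OF j, of "{..<n}"] es by simp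
    also have "\<dots> = (\<Sum>i<n. if i = j then c else 0)"
    proof (rule sum.cong)
      fix i assume "i \<in> {..<n}"
      then show "residue j (e i * s i) = (if i = j then c else 0)"
        using residue_mult[OF j, of "e i" "s i"] e s j by auto
    qed simp
    also have "\<dots> = c" using j by simp
    finally show ?thesis .
  qed
  then show ?thesis using R_memI[OF tS] by blast
qed

lemma subring_R: "subring_of R"
  unfolding subring_of_def
proof (intro conjI ballI)
  show "0 \<in> R" using R_memI[OF subring_zero[OF subring_S]] residue_zero by blast
  show "1 \<in> R" using R_memI[OF subring_one[OF subring_S]] residue_one by blast
  fix x y assume "x \<in> R" "y \<in> R"
  then obtain c d where x: "x \<in> S" "\<forall>i<n. residue i x = c"
    and y: "y \<in> S" "\<forall>i<n. residue i y = d" using R_memD by metis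
  show "x + y \<in> R"
    using x y by (intro R_memI[OF subring_add[OF subring_S x(1) y(1)], of "c + d"]) (simp add: residue_add)
  show "x - y \<in> R"
    using x y by (intro R_memI[OF subring_diff[OF subring_S x(1) y(1)], of "c - d"]) (simp add: residue_diff)
  show "x * y \<in> R"
    using x y by (intro R_memI[OF subring_mult[OF subring_S x(1) y(1)], of "c * d"]) (simp add: residue_mult)
qed

lemma R_neq_S: "\<exists>s\<in>S. s \<notin> R"
proof -
  obtain e where e: "e \<in> S" "residue 0 e = 1" "residue 1 e = 0"
    using exists_residue_indicator[of 0] two_le_n by force
  have "e \<notin> R"
  proof
    assume "e \<in> R"
    then obtain c where "\<forall>i<n. residue i e = c" using R_memD by blast
    then have "residue 0 e = residue 1 e" using two_le_n by simp
    then show False using e by simp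
  qed
  then show ?thesis using e by blast
qed

definition J where "J = {s \<in> S. \<forall>i<n. s \<in> m i}"

lemma J_iff_residue: "s \<in> J \<longleftrightarrow> s \<in> S \<and> (\<forall>i<n. residue i s = 0)"
  unfolding J_def using residue_eq_zero_iff by blast

lemma J_subset_R: "J \<subseteq> R"
  using J_iff_residue R_memI by blast

lemma J_subset_m: "i < n \<Longrightarrow> J \<subseteq> m i"
  unfolding J_def by blast

lemma ideal_S_J: "ideal_in S J"
  unfolding ideal_in_def J_def
  using subring_zero[OF subring_S] subring_add[OF subring_S] subring_mult[OF subring_S]
    ideal_zero[OF ideal_m] ideal_add[OF ideal_m] ideal_mult_left[OF ideal_m]
  by simp

lemma ideal_R_J: "ideal_in R J"
  using ideal_S_J J_subset_R R_subset_S unfolding ideal_in_def by blast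

lemma one_notin_J: "1 \<notin> J"
  using J_subset_m[of 0] prime_one[OF prime_m, of 0] two_le_n by auto

lemma inverse_mem_R:
  assumes r: "r \<in> R" "r \<notin> J"
  shows "inverse r \<in> R"
proof -
  obtain c where rS: "r \<in> S" and c: "\<And>i. i < n \<Longrightarrow> residue i r = c" using R_memD[OF r(1)] by blast
  then have "c \<noteq> 0" using r(2) J_iff_residue by auto
  then have r_notin: "r \<notin> m i" if "i < n" for i using c residue_eq_zero_iff[OF that rS] that by auto
  have inv: "inverse r \<in> S" using inverse_mem_S[OF rS r_notin] .
  have "r \<noteq> 0" using r_notin[of 0] two_le_n prime_zero[OF prime_m, of 0] by auto
  have "residue i (inverse r) = inverse c" if i: "i < n" for i
  proof -
    have "residue i (inverse r) * c = 1"
      using residue_mult[OF i inv rS] residue_one[OF i] \<open>r \<noteq> 0\<close> c[OF i] by simp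
    then show ?thesis by (metis inverse_unique mult.commute)
  qed
  then show ?thesis using R_memI[OF inv] by blast
qed

lemma ideal_R_subset_J: "ideal_in R I \<Longrightarrow> 1 \<notin> I \<Longrightarrow> I \<subseteq> J"
proof
  fix x assume I: "ideal_in R I" "1 \<notin> I" and x: "x \<in> I"
  show "x \<in> J"
  proof (rule ccontr)
    assume "x \<notin> J"
    then have "inverse x * x \<in> I" using inverse_mem_R ideal_mult_left[OF I(1) _ x] ideal_subset[OF I(1)] x by blast
    moreover have "x \<noteq> 0" using \<open>x \<notin> J\<close> ideal_zero[OF ideal_R_J] by blast
    ultimately show False using I(2) by simp
  qed
qed

lemma maximal_R_J: "maximal_in R J"
  unfolding maximal_in_def
proof (intro conjI allI impI)
  show "ideal_in R J" by (rule ideal_R_J)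
  show "J \<noteq> R" using one_notin_J subring_one[OF subring_R] by blast
  fix K assume K: "ideal_in R K \<and> J \<subseteq> K"
  then show "K = J \<or> K = R" using ideal_R_subset_J ideal_eq_if_one_mem by blast
qed

lemma local_R: "local_ring R"
  unfolding local_ring_def
proof (rule ex1I[of _ J])
  show "maximal_in R J" by (rule maximal_R_J)
  fix M assume M: "maximal_in R M"
  then have "M \<subseteq> J" using ideal_R_subset_J prime_one[OF maximal_imp_prime[OF subring_R M]]
    unfolding maximal_in_def by blast
  then show "M = J" using M ideal_R_J maximal_R_J unfolding maximal_in_def by blast
qed

lemma prime_R_J: "prime_in R J"
  using maximal_imp_prime[OF subring_R maximal_R_J] .

lemma prime_R_subset_J: "prime_in R P \<Longrightarrow> P \<subseteq> J"
  using ideal_R_subset_J prime_one prime_ideal by blast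

lemma loc_prime_R_J: "loc_prime R J = R"
proof
  show "R \<subseteq> loc_prime R J" using subset_loc_prime[OF subring_R prime_R_J] .
  show "loc_prime R J \<subseteq> R"
  proof
    fix x assume "x \<in> loc_prime R J"
    then obtain a b where ab: "a \<in> R" "b \<in> R" "b \<notin> J" "x = a / b" by (rule loc_prime_memE)
    then have "a * inverse b \<in> R" using inverse_mem_R subring_mult[OF subring_R] by blast
    then show "x \<in> R" using ab(4) by (simp add: divide_inverse)
  qed
qed

text \<open>This is where \<open>ht m\<^sub>i \<ge> 2\<close> is used: it only serves to make the \<open>m\<^sub>i\<close>, hence \<open>J\<close>, nonzero.\<close>
lemma J_nonzero: "\<exists>j\<in>J. j \<noteq> 0"
proof -
  have "\<exists>x. x \<in> m i \<and> x \<noteq> 0" if i: "i \<in> {..<n}" for i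
  proof -
    have "height_ge2 S (m i)" using height_m i by simp
    then obtain P0 P1 where P: "prime_in S P0" "P0 \<subset> P1" "P1 \<subset> m i"
      unfolding height_ge2_def by blast
    then obtain x where "x \<in> P1" "x \<notin> P0" by blast
    then show ?thesis using P prime_zero[OF P(1)] by blast
  qed
  then obtain x where "\<forall>i\<in>{..<n}. x i \<in> m i \<and> x i \<noteq> 0" by (metis bchoice)
  then have x: "\<And>i. i < n \<Longrightarrow> x i \<in> m i \<and> x i \<noteq> 0" by simp
  define j where "j = prod x {..<n}"
  have xS: "i < n \<Longrightarrow> x i \<in> S" for i using x m_subset by blast
  have "j \<in> S" unfolding j_def using xS by (intro subring_prod[OF subring_S]) auto
  moreover have "j \<in> m i" if i: "i < n" for i
    unfolding j_def using x xS i by (intro ideal_prod[OF subring_S ideal_m[OF i], of _ i]) auto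
  ultimately have "j \<in> J" unfolding J_def by blast
  moreover have "j \<noteq> 0" unfolding j_def using x by simp
  ultimately show ?thesis by blast
qed

lemma frac_R_eq: "Defs.frac R = Defs.frac S"
proof
  show "Defs.frac R \<subseteq> Defs.frac S" using frac_mono[OF R_subset_S] .
  show "Defs.frac S \<subseteq> Defs.frac R"
  proof
    fix x assume "x \<in> Defs.frac S"
    then obtain a b where ab: "a \<in> S" "b \<in> S" "b \<noteq> 0" "x = a / b" unfolding Defs.frac_def by blast
    obtain j where j: "j \<in> J" "j \<noteq> 0" using J_nonzero by blast
    have "x = (a * j) / (b * j)" "b * j \<noteq> 0" using ab j by simp_all
    moreover have "a * j \<in> R" "b * j \<in> R"
      using ideal_mult_left[OF ideal_S_J] ab(1,2) j(1) J_subset_R by (auto simp: mult.commute)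
    ultimately show "x \<in> Defs.frac R" using frac_memI by blast
  qed
qed

text \<open>With \<open>t\<^sub>i \<in> R\<close> constant of residue \<open>residue i s\<close>, the element \<open>\<Prod>\<^sub>i (s - t\<^sub>i)\<close> lies in \<open>J \<subseteq> R\<close>,
  so \<open>s\<close> is a root of a monic polynomial over \<open>R\<close>.\<close>
lemma integral_over_R:
  assumes s: "s \<in> S"
  shows "integral_over R s"
proof -
  have "\<forall>i\<in>{..<n}. \<exists>t. t \<in> R \<and> (\<forall>j<n. residue j t = residue i s)" using exists_R_residue by blast
  then obtain t where "\<forall>i\<in>{..<n}. t i \<in> R \<and> (\<forall>j<n. residue j (t i) = residue i s)" by (metis bchoice)
  then have t: "\<And>i. i < n \<Longrightarrow> t i \<in> R" "\<And>i. i < n \<Longrightarrow> residue i (t i) = residue i s" by auto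
  have tS: "i < n \<Longrightarrow> t i \<in> S" for i using t R_subset_S by auto
  define p0 where "p0 = (\<Prod>i<n. [:- t i, 1:])"
  define r where "r = (\<Prod>i<n. s - t i)"
  have rS: "r \<in> S" unfolding r_def using s tS subring_diff[OF subring_S] by (intro subring_prod[OF subring_S]) auto
  have "r \<in> m j" if j: "j < n" for j
  proof -
    have "s - t j \<in> m j" using residue_eq_iff[OF j s tS[OF j]] t(2)[OF j] by simp
    then show ?thesis unfolding r_def using j s tS subring_diff[OF subring_S]
      by (intro ideal_prod[OF subring_S ideal_m[OF j], of _ j]) auto
  qed
  then have rR: "r \<in> R" using rS J_subset_R unfolding J_def by blast
  define p where "p = p0 + [:- r:]"
  have "coeff p0 k \<in> R" for k
    unfolding p0_def using t(1) subring_uminus[OF subring_R] subring_zero[OF subring_R] subring_one[OF subring_R]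
    by (intro coeff_prod_mem[OF subring_R]) (auto simp: coeff_pCons split: nat.splits)
  then have "coeff p k \<in> R" for k
    unfolding p_def using rR subring_diff[OF subring_R] by (cases k) auto
  moreover have "lead_coeff p = 1"
  proof -
    have "degree p0 = n" unfolding p0_def by (subst degree_prod_eq_sum_degree) auto
    moreover have "lead_coeff p0 = 1" unfolding p0_def by (simp add: lead_coeff_prod)
    moreover have "coeff [:- r:] n = 0" using two_le_n by (cases n) simp_all
    ultimately show ?thesis unfolding p_def using two_le_n by (subst degree_add_eq_left) auto
  qed
  moreover have "poly p s = 0" unfolding p_def p0_def r_def by (simp add: poly_prod)
  ultimately show ?thesis by (rule integral_overI_monic)
qed

lemma integral_closure_R: "integral_closure R = S"
proof
  show "integral_closure R \<subseteq> S"
    unfolding integral_closure_def frac_R_eq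
    using gen_krull_integral_mem[OF gen_krull] integral_over_mono[OF R_subset_S] by blast
  show "S \<subseteq> integral_closure R"
    unfolding integral_closure_def frac_R_eq using integral_over_R subset_frac[OF subring_S] by blast
qed

lemma not_integrally_closed_R: "\<not> integrally_closed R"
  unfolding integrally_closed_def integral_closure_R using R_neq_S R_subset_S by blast

section \<open>Primes of the pullback ring\<close>

lemma prime_Int_R: "prime_in S q \<Longrightarrow> prime_in R (q \<inter> R)"
  using prime_Int_subring[OF subring_R R_subset_S] .

lemma m_Int_R: "i < n \<Longrightarrow> m i \<inter> R = J"
  using J_subset_m J_subset_R prime_R_subset_J[OF prime_Int_R[OF prime_m]] by blast

lemma height_one_not_maximal: "height_one S q \<Longrightarrow> i < n \<Longrightarrow> q \<noteq> m i"
  using height_m unfolding height_one_def by blast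

lemma exists_J_notin_prime:
  assumes q: "prime_in S q" and nm: "\<And>i. i < n \<Longrightarrow> q \<noteq> m i"
  shows "\<exists>j\<in>J. j \<notin> q"
proof -
  have "\<exists>x. x \<in> m i \<and> x \<notin> q" if i: "i \<in> {..<n}" for i
  proof (rule ccontr)
    assume "\<not> (\<exists>x. x \<in> m i \<and> x \<notin> q)"
    then have "m i \<subseteq> q" by blast
    moreover have "q \<noteq> S" using q unfolding prime_in_def by blast
    ultimately have "q = m i" using maximal_m prime_ideal[OF q] i unfolding maximal_in_def by blast
    then show False using nm i by blast
  qed
  then obtain x where "\<forall>i\<in>{..<n}. x i \<in> m i \<and> x i \<notin> q" by (metis bchoice)
  then have x: "\<And>i. i < n \<Longrightarrow> x i \<in> m i \<and> x i \<notin> q" by simp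
  have xS: "i < n \<Longrightarrow> x i \<in> S" for i using x m_subset by blast
  have "prod x {..<n} \<in> S - q" using x xS by (intro prime_prod[OF subring_S q]) auto
  moreover have "prod x {..<n} \<in> m i" if i: "i < n" for i
    using x xS i by (intro ideal_prod[OF subring_S ideal_m[OF i], of _ i]) auto
  ultimately show ?thesis unfolding J_def by blast
qed

lemma height_one_exists_J_mem:
  assumes h: "height_one S q"
  shows "\<exists>z\<in>J. z \<in> q \<and> z \<noteq> 0"
proof -
  have qp: "prime_in S q" using height_one_prime[OF h] .
  obtain w where w: "w \<in> q" "w \<noteq> 0" using h by (rule height_one_nonzero)
  obtain j where j: "j \<in> J" "j \<notin> q" using exists_J_notin_prime[OF qp height_one_not_maximal[OF h]] by blast
  have "j * w \<in> J" using ideal_mult_right[OF ideal_S_J] prime_subset[OF qp] w(1) j(1) by blast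
  moreover have "j * w \<in> q"
    using ideal_mult_left[OF prime_ideal[OF qp]] j(1) w(1) ideal_subset[OF ideal_S_J] by blast
  moreover have "j * w \<noteq> 0" using w j prime_zero[OF qp] by auto
  ultimately show ?thesis by blast
qed

lemma Int_R_neq_J:
  assumes "prime_in S q" "\<And>i. i < n \<Longrightarrow> q \<noteq> m i"
  shows "q \<inter> R \<noteq> J"
proof -
  obtain j where "j \<in> J" "j \<notin> q" using exists_J_notin_prime[OF assms] by blast
  then show ?thesis using J_subset_R by blast
qed

lemma loc_prime_Int_R:
  assumes q: "prime_in S q" and nm: "\<And>i. i < n \<Longrightarrow> q \<noteq> m i"
  shows "loc_prime S q = loc_prime R (q \<inter> R)"
proof
  obtain j where j: "j \<in> J" "j \<notin> q" using exists_J_notin_prime[OF q nm] by blast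
  show "loc_prime S q \<subseteq> loc_prime R (q \<inter> R)"
  proof
    fix x assume "x \<in> loc_prime S q"
    then obtain a b where ab: "a \<in> S" "b \<in> S" "b \<notin> q" "x = a / b" by (rule loc_prime_memE)
    have "j \<noteq> 0" "j \<in> S" using j prime_zero[OF q] ideal_subset[OF ideal_S_J] by auto
    then have "x = (a * j) / (b * j)" using ab(4) by simp
    moreover have "a * j \<in> R" "b * j \<in> R"
      using ideal_mult_left[OF ideal_S_J] ab(1,2) j(1) J_subset_R by blast+
    moreover have "b * j \<notin> q" using prime_mult[OF q ab(2) \<open>j \<in> S\<close>] j(2) ab(3) by blast
    ultimately show "x \<in> loc_prime R (q \<inter> R)" using loc_prime_memI by blast
  qed
  show "loc_prime R (q \<inter> R) \<subseteq> loc_prime S q"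
  proof
    fix x assume "x \<in> loc_prime R (q \<inter> R)"
    then obtain a b where "a \<in> R" "b \<in> R" "b \<notin> q \<inter> R" "x = a / b" by (rule loc_prime_memE)
    then show "x \<in> loc_prime S q" using loc_prime_memI[of a S b q x] R_subset_S by blast
  qed
qed

lemma Int_R_inj:
  assumes a: "prime_in S a" and b: "prime_in S b" and eq: "a \<inter> R = b \<inter> R" and ne: "a \<inter> R \<noteq> J"
  shows "a = b"
proof -
  obtain j where j: "j \<in> J" "j \<notin> a \<inter> R" using prime_R_subset_J[OF prime_Int_R[OF a]] ne by blast
  then have ja: "j \<notin> a" and jb: "j \<notin> b" and jS: "j \<in> S"
    using J_subset_R eq ideal_subset[OF ideal_S_J] by blast+
  have "s \<in> a \<longleftrightarrow> s \<in> b" if s: "s \<in> S" for s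
  proof -
    have "s * j \<in> R" using ideal_mult_left[OF ideal_S_J s j(1)] J_subset_R by blast
    have "s \<in> a \<longleftrightarrow> s * j \<in> a"
      using prime_mult[OF a s jS] ja ideal_mult_right[OF prime_ideal[OF a] jS] by blast
    also have "\<dots> \<longleftrightarrow> s * j \<in> b" using eq \<open>s * j \<in> R\<close> by blast
    also have "\<dots> \<longleftrightarrow> s \<in> b"
      using prime_mult[OF b s jS] jb ideal_mult_right[OF prime_ideal[OF b] jS] by blast
    finally show ?thesis .
  qed
  then show ?thesis using prime_subset[OF a] prime_subset[OF b] by blast
qed

lemma prime_R_lift:
  assumes P: "prime_in R P" and ne: "P \<noteq> J"
  shows "\<exists>q. prime_in S q \<and> q \<inter> R = P \<and> (\<forall>i<n. q \<noteq> m i)"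
proof -
  obtain j where j: "j \<in> J" "j \<notin> P" using prime_R_subset_J[OF P] ne by blast
  have jR: "j \<in> R" using j J_subset_R by blast
  have sjR: "s * j \<in> R" if "s \<in> S" for s using ideal_mult_left[OF ideal_S_J that j(1)] J_subset_R by blast
  note PI = prime_ideal[OF P]
  define q where "q = {s \<in> S. s * j \<in> P}"
  have "prime_in S q"
    unfolding prime_in_def ideal_in_def
  proof (intro conjI ballI impI)
    show "q \<subseteq> S" "0 \<in> q" unfolding q_def using subring_zero[OF subring_S] ideal_zero[OF PI] by auto
    show "q \<noteq> S" using j(2) subring_one[OF subring_S] unfolding q_def by (metis (no_types, lifting) mem_Collect_eq mult_1)
    fix x y assume "x \<in> q" "y \<in> q"
    then show "x + y \<in> q"
      unfolding q_def using subring_add[OF subring_S] ideal_add[OF PI] by (auto simp: distrib_right)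
  next
    fix r x assume r: "r \<in> S" and x: "x \<in> q"
    then have xj: "x * j \<in> P" and rx: "r * x \<in> S"
      using subring_mult[OF subring_S r] unfolding q_def by auto
    have "(r * x * j) * j = (r * j) * (x * j)" by (simp add: ac_simps)
    then have "(r * x * j) * j \<in> P" using ideal_mult_left[OF PI sjR[OF r] xj] by metis
    then have "r * x * j \<in> P" using prime_mult[OF P sjR[OF rx] jR] j(2) by blast
    then show "r * x \<in> q" unfolding q_def using rx by simp
  next
    fix x y assume x: "x \<in> S" and y: "y \<in> S" and xy: "x * y \<in> q"
    have "(x * j) * (y * j) = (x * y * j) * j" by (simp add: ac_simps)
    moreover have "(x * y * j) * j \<in> P" using xy ideal_mult_right[OF PI jR] unfolding q_def by blast
    ultimately have "x * j \<in> P \<or> y * j \<in> P" using prime_mult[OF P sjR[OF x] sjR[OF y]] by metis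
    then show "x \<in> q \<or> y \<in> q" unfolding q_def using x y by blast
  qed
  moreover have "q \<inter> R = P"
    using prime_mult[OF P _ jR] j(2) ideal_mult_right[OF PI jR] prime_subset[OF P] R_subset_S
    unfolding q_def by blast
  moreover have "\<forall>i<n. q \<noteq> m i" using m_Int_R \<open>q \<inter> R = P\<close> ne by blast
  ultimately show ?thesis by blast
qed

section \<open>Overrings with going down\<close>

text \<open>If \<open>x \<in> T\<close> were not in \<open>S\<^sub>q\<close>, then \<open>1/x\<close> would be a non-unit of the valuation ring \<open>S\<^sub>q = R\<^bsub>q\<inter>R\<^esub>\<close>,
  so some \<open>(1/x)\<^sup>N\<close> is a multiple of \<open>z \<in> q \<inter> J\<close>; clearing denominators puts an element of
  \<open>R - q\<close> into \<open>Q\<close>.\<close>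
lemma lying_over_height_one_subset_loc_prime:
  assumes h: "height_one S q" and T: "overring R T" and Q: "prime_in T Q" "Q \<inter> R = q \<inter> R"
  shows "T \<subseteq> loc_prime S q"
proof
  fix x assume xT: "x \<in> T"
  have qp: "prime_in S q" using height_one_prime[OF h] .
  have subT: "subring_of T" and RT: "R \<subseteq> T" and T_frac: "T \<subseteq> Defs.frac R"
    using T unfolding overring_def by auto
  define V where "V = loc_prime S q"
  have V_eq: "V = loc_prime R (q \<inter> R)"
    unfolding V_def using loc_prime_Int_R[OF qp height_one_not_maximal[OF h]] .
  have V: "valuation_domain V" unfolding V_def using gen_krull_valuation[OF gen_krull h] .
  have SV: "S \<subseteq> V" unfolding V_def using subset_loc_prime[OF subring_S qp] .
  show "x \<in> loc_prime S q"
  proof (rule ccontr)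
    assume xV: "x \<notin> loc_prime S q"
    then have "x \<noteq> 0" using SV subring_zero[OF subring_S] V_def by auto
    moreover have "x \<in> Defs.frac V" using xT T_frac frac_mono[of R V] R_subset_S SV by blast
    ultimately have inv_x: "inverse x \<in> V" "inverse x \<noteq> 0" "inverse (inverse x) \<notin> V"
      using V xV unfolding valuation_domain_def V_def by auto
    obtain z where z: "z \<in> J" "z \<in> q" "z \<noteq> 0" using height_one_exists_J_mem[OF h] by blast
    then have "z \<in> R" using J_subset_R by blast
    then have zQ: "z \<in> Q" using Q(2) z(2) by blast
    obtain N v where Nv: "v \<in> V" "inverse x ^ N = z * v"
      using height_one_power_divisible[OF subring_S h gen_krull_valuation[OF gen_krull h]] inv_x
        \<open>z \<in> R\<close> z(3) R_subset_S SV unfolding V_def by blast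
    obtain a b where ab: "a \<in> R" "b \<in> R" "b \<notin> q \<inter> R" "v = a / b"
      using Nv(1) unfolding V_eq by (rule loc_prime_memE)
    have "b \<noteq> 0" using ab(2,3) prime_zero[OF qp] subring_zero[OF subring_R] by auto
    then have "b = z * (a * x ^ N)" using Nv(2) ab(4) \<open>x \<noteq> 0\<close> by (simp add: field_simps power_inverse)
    moreover have "a * x ^ N \<in> T" using subring_mult[OF subT] subring_power[OF subT] ab(1) RT xT by blast
    ultimately have "b \<in> Q" using ideal_mult_right[OF prime_ideal[OF Q(1)] _ zQ] by simp
    then show False using ab(2,3) Q(2) by blast
  qed
qed

lemma going_down_lies_over_height_one:
  assumes gd: "going_down R T" and Q: "prime_in T Q" "Q \<inter> R = J" and h: "height_one S q"
  shows "\<exists>P. prime_in T P \<and> P \<subseteq> Q \<and> P \<inter> R = q \<inter> R"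
proof -
  have qp: "prime_in S q" using height_one_prime[OF h] .
  have "q \<inter> R \<subset> J"
    using prime_R_subset_J[OF prime_Int_R[OF qp]] Int_R_neq_J[OF qp height_one_not_maximal[OF h]] by blast
  then show ?thesis using going_downD[OF gd prime_Int_R[OF qp] prime_R_J _ Q] by blast
qed

lemma going_down_subset_S:
  assumes T: "overring R T" and gd: "going_down R T" and Q: "prime_in T Q" "Q \<inter> R = J"
  shows "T \<subseteq> S"
proof
  fix x assume x: "x \<in> T"
  show "x \<in> S"
  proof (rule gen_krull_memI[OF gen_krull])
    show "x \<in> Defs.frac S" using x T frac_R_eq unfolding overring_def by blast
    fix P assume h: "height_one S P"
    obtain P' where "prime_in T P'" "P' \<inter> R = P \<inter> R"
      using going_down_lies_over_height_one[OF gd Q h] by blast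
    then show "x \<in> loc_prime S P" using lying_over_height_one_subset_loc_prime[OF h T] x by blast
  qed
qed

text \<open>A nonzero non-unit \<open>u\<close> of \<open>S\<close> lies in a height-one prime \<open>P\<close> of \<open>S\<close>; the prime of \<open>T\<close> below \<open>Q\<close>
  lying over \<open>P \<inter> R\<close> then contains \<open>u\<close>.\<close>
lemma going_down_mem_lying_over_J:
  assumes T: "overring R T" and gd: "going_down R T" and Q: "prime_in T Q" "Q \<inter> R = J"
    and u: "u \<in> T" "u \<in> m k" "k < n" "u \<noteq> 0"
  shows "u \<in> Q"
proof -
  have RT: "R \<subseteq> T" using T unfolding overring_def by auto
  have uS: "u \<in> S" using u m_subset by blast
  have "inverse u \<notin> S"
  proof
    assume "inverse u \<in> S"
    then have "inverse u * u \<in> m k" using ideal_mult_left[OF ideal_m[OF u(3)] _ u(2)] by blast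
    then show False using u(4) prime_one[OF prime_m[OF u(3)]] by simp
  qed
  then obtain P where h: "height_one S P" and "inverse u \<notin> loc_prime S P"
    using gen_krull_memI[OF gen_krull inverse_mem_frac[OF subring_S uS]] by blast
  then have uP: "u \<in> P" using inverse_mem_loc_prime[OF subring_S uS] by blast
  have Pp: "prime_in S P" using height_one_prime[OF h] .
  obtain P' where P': "prime_in T P'" "P' \<subseteq> Q" "P' \<inter> R = P \<inter> R"
    using going_down_lies_over_height_one[OF gd Q h] by blast
  have "u \<in> loc_prime R (P \<inter> R)"
    using lying_over_height_one_subset_loc_prime[OF h T P'(1,3)] u(1)
      loc_prime_Int_R[OF Pp height_one_not_maximal[OF h]] by blast
  then obtain a b where ab: "a \<in> R" "b \<in> R" "b \<notin> P \<inter> R" "u = a / b" by (rule loc_prime_memE)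
  have "b \<noteq> 0" using ab prime_zero[OF Pp] subring_zero[OF subring_R] by auto
  then have ub: "u * b = a" using ab(4) by simp
  have "u * b \<in> P" using ideal_mult_right[OF prime_ideal[OF Pp] _ uP] ab(2) R_subset_S by blast
  then have "u * b \<in> P'" using ub ab(1) P'(3) by blast
  moreover have "b \<notin> P'" using ab(2,3) P'(3) by blast
  ultimately show ?thesis using prime_mult[OF P'(1) u(1)] ab(2) RT P'(2) by blast
qed

lemma exists_complementary_residues:
  assumes subT: "subring_of T" and RT: "R \<subseteq> T" and e: "e \<in> T" "e \<in> S"
  shows "\<exists>h\<in>T. h \<in> S \<and> (\<forall>i<n. residue i h = 0 \<longleftrightarrow> residue i e \<noteq> 0)"
proof -
  define D where "D = (\<lambda>i. residue i e) ` {..<n} - {0}"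
  have "\<forall>d\<in>D. \<exists>t. t \<in> R \<and> (\<forall>i<n. residue i t = d)" using exists_R_residue by blast
  then obtain c where "\<forall>d\<in>D. c d \<in> R \<and> (\<forall>i<n. residue i (c d) = d)" by (metis bchoice)
  then have c: "\<And>d. d \<in> D \<Longrightarrow> c d \<in> R" "\<And>d i. d \<in> D \<Longrightarrow> i < n \<Longrightarrow> residue i (c d) = d" by auto
  define h where "h = (\<Prod>d\<in>D. e - c d)"
  have "h \<in> T" unfolding h_def using e(1) c(1) RT subring_diff[OF subT] by (intro subring_prod[OF subT]) blast
  have "h \<in> S" unfolding h_def using e(2) c(1) R_subset_S subring_diff[OF subring_S]
    by (intro subring_prod[OF subring_S]) blast
  have "residue i h = (\<Prod>d\<in>D. residue i e - d)" if i: "i < n" for i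
  proof -
    have "residue i h = (\<Prod>d\<in>D. residue i (e - c d))" unfolding h_def
      using residue_prod[OF i, of D "\<lambda>d. e - c d"] e(2) c(1) R_subset_S subring_diff[OF subring_S] by blast
    also have "\<dots> = (\<Prod>d\<in>D. residue i e - d)"
    proof (rule prod.cong)
      fix d assume "d \<in> D"
      then show "residue i (e - c d) = residue i e - d"
        using residue_diff[OF i e(2), of "c d"] c i R_subset_S by auto
    qed simp
    finally show ?thesis .
  qed
  moreover have "finite D" "0 \<notin> D" unfolding D_def by auto
  ultimately have "residue i h = 0 \<longleftrightarrow> residue i e \<in> D" if "i < n" for i
    using that by (auto simp: prod_zero_iff)
  then have "residue i h = 0 \<longleftrightarrow> residue i e \<noteq> 0" if "i < n" for i
    using that unfolding D_def by blast
  then show ?thesis using \<open>h \<in> T\<close> \<open>h \<in> S\<close> by blast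
qed

text \<open>The inverse of such an element lies in \<open>S\<close> and is integral over \<open>R\<close>, hence lies in \<open>T\<close>.\<close>
lemma prime_overring_mem_m:
  assumes subT: "subring_of T" and RT: "R \<subseteq> T" and Q: "prime_in T Q" and g: "g \<in> Q" "g \<in> S"
  shows "\<exists>i<n. g \<in> m i"
proof (rule ccontr)
  assume no_m: "\<not> (\<exists>i<n. g \<in> m i)"
  then have "g \<noteq> 0" using prime_zero[OF prime_m, of 0] two_le_n by auto
  have "inverse g \<in> S" using inverse_mem_S[OF g(2)] no_m by blast
  then have "integral_over T (inverse g)" using integral_over_mono[OF RT integral_over_R] by blast
  moreover have "g \<in> T" using g(1) prime_subset[OF Q] by blast
  ultimately have "inverse g \<in> T" using integral_over_inverse_mem[OF subT] \<open>g \<noteq> 0\<close> by simp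
  then have "inverse g * g \<in> Q" using ideal_mult_left[OF prime_ideal[OF Q] _ g(1)] by blast
  then show False using \<open>g \<noteq> 0\<close> prime_one[OF Q] by simp
qed

text \<open>From \<open>t \<in> T - R\<close> one builds \<open>h + e \<in> Q\<close> with no residue equal to \<open>0\<close>.\<close>
lemma going_down_lying_over_J_eq_R:
  assumes T: "overring R T" and gd: "going_down R T" and Q: "prime_in T Q" "Q \<inter> R = J"
  shows "T = R"
proof (rule ccontr)
  assume "T \<noteq> R"
  have subT: "subring_of T" and RT: "R \<subseteq> T" using T unfolding overring_def by auto
  have TS: "T \<subseteq> S" using going_down_subset_S[OF T gd Q] .
  have n0: "0 < n" using two_le_n by simp
  obtain t where t: "t \<in> T" "t \<notin> R" using \<open>T \<noteq> R\<close> RT by blast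
  obtain t0 where t0: "t0 \<in> R" "\<And>i. i < n \<Longrightarrow> residue i t0 = residue 0 t"
    using exists_R_residue by blast
  define e where "e = t - t0"
  have eT: "e \<in> T" and eS: "e \<in> S" unfolding e_def using t t0 RT TS subring_diff[OF subT] by blast+
  have "t \<in> S" "t0 \<in> S" using t(1) t0(1) TS R_subset_S by blast+
  then have e0: "residue 0 e = 0" unfolding e_def using residue_diff[OF n0] t0(2)[OF n0] by simp
  have "e \<notin> J"
  proof
    assume "e \<in> J"
    then have "e + t0 \<in> R" using J_subset_R t0(1) subring_add[OF subring_R] by blast
    then show False using t(2) unfolding e_def by simp
  qed
  then obtain k where k: "k < n" "residue k e \<noteq> 0" using J_iff_residue eS by blast
  obtain h where h: "h \<in> T" "h \<in> S" "\<And>i. i < n \<Longrightarrow> residue i h = 0 \<longleftrightarrow> residue i e \<noteq> 0"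
    using exists_complementary_residues[OF subT RT eT eS] by blast
  have "e \<in> m 0" using e0 residue_eq_zero_iff[OF n0 eS] by blast
  moreover have "e \<noteq> 0" using k residue_zero by auto
  ultimately have "e \<in> Q" using going_down_mem_lying_over_J[OF T gd Q eT _ n0] by blast
  moreover have "h \<in> m k" using h(3)[OF k(1)] k(2) residue_eq_zero_iff[OF k(1) h(2)] by blast
  moreover have "h \<noteq> 0" using h(3)[OF n0] e0 residue_zero[OF n0] by auto
  ultimately have "e \<in> Q" "h \<in> Q" using going_down_mem_lying_over_J[OF T gd Q h(1) _ k(1)] by blast+
  then have "h + e \<in> Q" using ideal_add[OF prime_ideal[OF Q(1)]] by blast
  then obtain i where i: "i < n" "h + e \<in> m i"
    using prime_overring_mem_m[OF subT RT Q(1)] subring_add[OF subring_S h(2) eS] by blast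
  have "residue i (h + e) = residue i h + residue i e" using residue_add[OF i(1) h(2) eS] .
  then have "residue i (h + e) \<noteq> 0" using h(3)[OF i(1)] by (cases "residue i e = 0") simp_all
  then show False using i residue_eq_zero_iff[OF i(1) subring_add[OF subring_S h(2) eS]] by blast
qed

section \<open>Perinormality\<close>

text \<open>\<open>P\<close> lifts to a non-maximal prime \<open>q\<close> of \<open>S\<close> with \<open>S\<^sub>q = R\<^sub>P\<close>; \<open>T\<close> lies in \<open>S\<^sub>q\<close> because going
  down supplies, for each height-one prime below \<open>q\<close>, a prime of \<open>T\<close> lying over its contraction.\<close>
lemma going_down_local_eq_loc_prime:
  assumes T: "overring R T" and gd: "going_down R T" and lT: "local_ring T"
    and N: "maximal_in T N" and ne: "N \<inter> R \<noteq> J"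
  shows "T = loc_prime R (N \<inter> R)"
proof
  have subT: "subring_of T" and RT: "R \<subseteq> T" using T unfolding overring_def by auto
  define P where "P = N \<inter> R"
  have Np: "prime_in T N" using maximal_imp_prime[OF subT N] .
  have Pp: "prime_in R P" unfolding P_def using prime_Int_subring[OF subring_R RT Np] .
  obtain q where q: "prime_in S q" "q \<inter> R = P" "\<forall>i<n. q \<noteq> m i"
    using prime_R_lift[OF Pp ne[folded P_def]] by blast
  have eq: "loc_prime S q = loc_prime R P" using loc_prime_Int_R[OF q(1)] q(2,3) by simp
  show "loc_prime R (N \<inter> R) \<subseteq> T"
  proof
    fix x assume "x \<in> loc_prime R (N \<inter> R)"
    then obtain a b where ab: "a \<in> R" "b \<in> R" "b \<notin> N \<inter> R" "x = a / b" by (rule loc_prime_memE)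
    then have "inverse b \<in> T" using local_ring_inverse_mem[OF subT lT N] RT by blast
    then show "x \<in> T" using subring_mult[OF subT] ab RT by (auto simp: divide_inverse)
  qed
  show "T \<subseteq> loc_prime R (N \<inter> R)"
  proof
    fix x assume xT: "x \<in> T"
    have "x \<in> loc_prime S q"
    proof (rule gen_krull_loc_prime_memI[OF gen_krull q(1)])
      show "x \<in> Defs.frac S" using xT T frac_R_eq unfolding overring_def by blast
      fix q' assume h: "height_one S q'" and "q' \<subseteq> q"
      have "\<exists>Q'. prime_in T Q' \<and> Q' \<inter> R = q' \<inter> R"
      proof (cases "q' \<inter> R = P")
        case True then show ?thesis using Np P_def by blast
      next
        case False
        then have "q' \<inter> R \<subset> P" using \<open>q' \<subseteq> q\<close> q(2) by blast
        then show ?thesis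
          using going_downD[OF gd prime_Int_R[OF height_one_prime[OF h]] Pp _ Np] P_def by blast
      qed
      then show "x \<in> loc_prime S q'" using lying_over_height_one_subset_loc_prime[OF h T] xT by blast
    qed
    then show "x \<in> loc_prime R (N \<inter> R)" using eq P_def by simp
  qed
qed

lemma perinormal_R: "perinormal R"
  unfolding perinormal_def
proof (intro conjI allI impI)
  show "subring_of R" by (rule subring_R)
  fix T assume "overring R T \<and> local_ring T \<and> going_down R T"
  then have T: "overring R T" and lT: "local_ring T" and gd: "going_down R T" by auto
  have subT: "subring_of T" and RT: "R \<subseteq> T" using T unfolding overring_def by auto
  obtain N where N: "maximal_in T N" using lT unfolding local_ring_def by blast
  have Np: "prime_in T N" using maximal_imp_prime[OF subT N] .
  show "\<exists>P. prime_in R P \<and> T = loc_prime R P"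
  proof (cases "N \<inter> R = J")
    case True
    then have "T = R" using going_down_lying_over_J_eq_R[OF T gd Np] by blast
    then show ?thesis using loc_prime_R_J prime_R_J by auto
  next
    case False
    then show ?thesis
      using going_down_local_eq_loc_prime[OF T gd lT N] prime_Int_subring[OF subring_R RT Np] by blast
  qed
qed

lemma ideal_containing_J_eq:
  assumes subT: "subring_of T" and RT: "R \<subseteq> T" and noQ: "\<not> (\<exists>Q. prime_in T Q \<and> Q \<inter> R = J)"
    and I: "ideal_in T I" "J \<subseteq> I"
  shows "1 \<in> I"
proof (rule ccontr)
  assume "1 \<notin> I"
  then obtain M where M: "maximal_in T M" "I \<subseteq> M" using exists_maximal_ideal[OF subT I(1)] by blast
  have Mp: "prime_in T M" using maximal_imp_prime[OF subT M(1)] .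
  then have "M \<inter> R \<subseteq> J" using prime_R_subset_J[OF prime_Int_subring[OF subring_R RT]] by blast
  moreover have "J \<subseteq> M \<inter> R" using I(2) M(2) J_subset_R by blast
  ultimately show False using noQ Mp by blast
qed

lemma S_subset_if_no_prime_over_J:
  assumes subT: "subring_of T" and RT: "R \<subseteq> T" and noQ: "\<not> (\<exists>Q. prime_in T Q \<and> Q \<inter> R = J)"
  shows "S \<subseteq> T"
proof -
  define K where "K = {t \<in> T. \<forall>s\<in>S. s * t \<in> T}"
  have "ideal_in T K" unfolding ideal_in_def
  proof (intro conjI ballI)
    show "K \<subseteq> T" "0 \<in> K" unfolding K_def using subring_zero[OF subT] by auto
    fix x y assume "x \<in> K" "y \<in> K"
    then show "x + y \<in> K" unfolding K_def using subring_add[OF subT] by (simp add: distrib_left)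
  next
    fix r x assume "r \<in> T" "x \<in> K"
    then show "r * x \<in> K" unfolding K_def
      using subring_mult[OF subT] by (auto simp: mult.left_commute[of _ r])
  qed
  moreover have "J \<subseteq> K" unfolding K_def using ideal_mult_left[OF ideal_S_J] J_subset_R RT by blast
  ultimately have "1 \<in> K" using ideal_containing_J_eq[OF subT RT noQ] by blast
  then show ?thesis unfolding K_def by auto
qed

text \<open>Away from \<open>J\<close>, contraction to \<open>R\<close> is injective on primes of \<open>S\<close>, so going down for \<open>R \<subseteq> T\<close>
  transfers to \<open>S \<subseteq> T\<close>.\<close>
lemma going_down_S:
  assumes gd: "going_down R T" and ST: "S \<subseteq> T"
  shows "going_down S T"
  unfolding going_down_def
proof (intro allI impI)
  fix p q Q assume "prime_in S p \<and> prime_in S q \<and> p \<subset> q \<and> prime_in T Q \<and> Q \<inter> S = q"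
  then have p: "prime_in S p" and q: "prime_in S q" and pq: "p \<subset> q" and Q: "prime_in T Q" "Q \<inter> S = q"
    by auto
  have QR: "Q \<inter> R = q \<inter> R" using Q(2) R_subset_S by blast
  have "p \<noteq> m i" if i: "i < n" for i
  proof
    assume "p = m i"
    then have "q = p \<or> q = S" using maximal_m[OF i] prime_ideal[OF q] pq unfolding maximal_in_def by blast
    then show False using pq q unfolding prime_in_def by blast
  qed
  then have pJ: "p \<inter> R \<noteq> J" using Int_R_neq_J[OF p] by blast
  have "p \<inter> R \<subset> q \<inter> R" using pq Int_R_inj[OF p q _ pJ] by blast
  then obtain P where P: "prime_in T P" "P \<subseteq> Q" "P \<inter> R = p \<inter> R"
    using going_downD[OF gd prime_Int_R[OF p] prime_Int_R[OF q] _ Q(1) QR] by blast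
  have PS: "prime_in S (P \<inter> S)" using prime_Int_subring[OF subring_S ST P(1)] .
  have "(P \<inter> S) \<inter> R = p \<inter> R" using P(3) R_subset_S by blast
  then have "P \<inter> S = p" using Int_R_inj[OF PS p] pJ by blast
  then show "\<exists>P. prime_in T P \<and> P \<subseteq> Q \<and> P \<inter> S = p" using P by blast
qed

lemma loc_S_meets_J:
  assumes subT: "subring_of T" and RT: "R \<subseteq> T" and noQ: "\<not> (\<exists>Q. prime_in T Q \<and> Q \<inter> R = J)"
    and M: "multiplicative_in S M" "T = loc S M"
  shows "\<exists>W\<in>M. W \<in> J"
proof -
  have MS: "M \<subseteq> S" and M1: "1 \<in> M" and M0: "0 \<notin> M" and Mmult: "\<And>x y. x \<in> M \<Longrightarrow> y \<in> M \<Longrightarrow> x * y \<in> M"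
    using M(1) unfolding multiplicative_in_def by auto
  define K where "K = {t \<in> T. \<exists>w\<in>M. w * t \<in> J}"
  have "ideal_in T K" unfolding ideal_in_def
  proof (intro conjI ballI)
    show "K \<subseteq> T" "0 \<in> K" unfolding K_def using subring_zero[OF subT] M1 ideal_zero[OF ideal_S_J] by force+
    fix x y assume "x \<in> K" "y \<in> K"
    then obtain w w' where w: "x \<in> T" "w \<in> M" "w * x \<in> J" "y \<in> T" "w' \<in> M" "w' * y \<in> J"
      unfolding K_def by blast
    have "(w * w') * (x + y) = w' * (w * x) + w * (w' * y)" by (simp add: algebra_simps)
    moreover have "w' * (w * x) \<in> J" "w * (w' * y) \<in> J" using ideal_mult_left[OF ideal_S_J] w MS by blast+
    ultimately have "(w * w') * (x + y) \<in> J" using ideal_add[OF ideal_S_J] by metis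
    then show "x + y \<in> K" unfolding K_def using w Mmult subring_add[OF subT] by blast
  next
    fix r x assume r: "r \<in> T" and "x \<in> K"
    then obtain w where w: "x \<in> T" "w \<in> M" "w * x \<in> J" unfolding K_def by blast
    obtain c v where cv: "c \<in> S" "v \<in> M" "r = c / v" using r M(2) unfolding loc_def by blast
    have "v \<noteq> 0" using cv(2) M0 by blast
    then have "(v * w) * (r * x) = c * (w * x)" using cv(3) by (simp add: field_simps)
    moreover have "c * (w * x) \<in> J" using ideal_mult_left[OF ideal_S_J cv(1) w(3)] .
    ultimately have "(v * w) * (r * x) \<in> J" by (simp only:)
    then show "r * x \<in> K"
      unfolding K_def using Mmult[OF cv(2) w(2)] subring_mult[OF subT r w(1)] by blast
  qed
  moreover have "J \<subseteq> K" unfolding K_def using J_subset_R RT M1 by force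
  ultimately have "1 \<in> K" using ideal_containing_J_eq[OF subT RT noQ] by blast
  then show ?thesis unfolding K_def by auto
qed

text \<open>With \<open>W \<in> M \<inter> J\<close>, a fraction \<open>a / w\<close> of \<open>S\<^sub>M\<close> equals \<open>(a W) / (w W)\<close>, with numerator and
  denominator in \<open>J \<subseteq> R\<close>.\<close>
lemma loc_S_eq_loc_R:
  assumes subT: "subring_of T" and RT: "R \<subseteq> T" and noQ: "\<not> (\<exists>Q. prime_in T Q \<and> Q \<inter> R = J)"
    and M: "multiplicative_in S M" "T = loc S M"
  shows "\<exists>M'. multiplicative_in R M' \<and> T = loc R M'"
proof -
  have MS: "M \<subseteq> S" and M0: "0 \<notin> M" and Mmult: "\<And>x y. x \<in> M \<Longrightarrow> y \<in> M \<Longrightarrow> x * y \<in> M"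
    using M(1) unfolding multiplicative_in_def by auto
  obtain W where W: "W \<in> M" "W \<in> J" using loc_S_meets_J[OF assms] by blast
  define M' where "M' = {u \<in> R. u \<noteq> 0 \<and> inverse u \<in> T}"
  have "multiplicative_in R M'" unfolding multiplicative_in_def M'_def
    using subring_one[OF subring_R] subring_mult[OF subring_R] subring_one[OF subT] subring_mult[OF subT]
    by (auto simp: inverse_mult_distrib)
  moreover have "T = loc R M'"
  proof
    show "loc R M' \<subseteq> T"
      unfolding loc_def M'_def using RT subring_mult[OF subT] by (auto simp: divide_inverse)
    show "T \<subseteq> loc R M'"
    proof
      fix t assume "t \<in> T"
      then obtain a w where aw: "a \<in> S" "w \<in> M" "t = a / w" using M(2) unfolding loc_def by blast
      define u where "u = w * W"
      have uM: "u \<in> M" unfolding u_def using Mmult aw(2) W(1) by blast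
      have "u \<in> J" unfolding u_def using ideal_mult_left[OF ideal_S_J] aw(2) W(2) MS by blast
      moreover have "u \<noteq> 0" using uM M0 by blast
      moreover have "inverse u \<in> T" using M(2) inverse_mem_loc[OF subring_S uM] by simp
      ultimately have "u \<in> M'" unfolding M'_def using J_subset_R by blast
      have "w \<noteq> 0" using aw(2) M0 by blast
      then have "u * t = a * W" unfolding u_def using aw(3) by simp
      then have "u * t \<in> R" using ideal_mult_left[OF ideal_S_J aw(1) W(2)] J_subset_R by auto
      moreover have "t = (u * t) / u" using \<open>u \<noteq> 0\<close> by simp
      ultimately show "t \<in> loc R M'" using loc_memI \<open>u \<in> M'\<close> by blast
    qed
  qed
  ultimately show ?thesis by blast
qed

lemma globally_perinormal_R:
  assumes gS: "globally_perinormal S"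
  shows "globally_perinormal R"
  unfolding globally_perinormal_def
proof (intro conjI allI impI)
  show "subring_of R" by (rule subring_R)
  fix T assume "overring R T \<and> going_down R T"
  then have T: "overring R T" and gd: "going_down R T" by auto
  have subT: "subring_of T" and RT: "R \<subseteq> T" and T_frac: "T \<subseteq> Defs.frac R"
    using T unfolding overring_def by auto
  show "\<exists>M. multiplicative_in R M \<and> T = loc R M"
  proof (cases "\<exists>Q. prime_in T Q \<and> Q \<inter> R = J")
    case True
    then have "T = R" using going_down_lying_over_J_eq_R[OF T gd] by blast
    moreover have "loc R {1} = R" unfolding loc_def by auto
    moreover have "multiplicative_in R {1}"
      unfolding multiplicative_in_def using subring_one[OF subring_R] by simp
    ultimately show ?thesis by metis
  next
    case False
    have ST: "S \<subseteq> T" using S_subset_if_no_prime_over_J[OF subT RT False] .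
    then have "overring S T" unfolding overring_def using subT T_frac frac_R_eq by auto
    moreover have "going_down S T" using going_down_S[OF gd ST] .
    ultimately obtain M where "multiplicative_in S M" "T = loc S M"
      using gS unfolding globally_perinormal_def by blast
    then show ?thesis using loc_S_eq_loc_R[OF subT RT False] by blast
  qed
qed

end

theorem theorem5p2:
  fixes S :: "'a::field set" and n :: nat and m :: "nat \<Rightarrow> 'a set"
    and \<alpha> :: "nat \<Rightarrow> 'b::field \<Rightarrow> 'a set"
  assumes "gen_krull S"
    and "n \<ge> 2"
    and "inj_on m {..<n}"
    and "{M. maximal_in S M} = m ` {..<n}"
    and "\<forall>j<n. height_ge2 S (m j)"
    and "\<forall>i<n. \<alpha> i \<in> ring_iso (ringS (UNIV :: 'b set)) (ringS S Quot m i)"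
  shows "local_ring (pullback_ring S n m \<alpha>) \<and> perinormal (pullback_ring S n m \<alpha>)
       \<and> (globally_perinormal S \<longrightarrow> globally_perinormal (pullback_ring S n m \<alpha>))
       \<and> \<not> integrally_closed (pullback_ring S n m \<alpha>)
       \<and> integral_closure (pullback_ring S n m \<alpha>) = S"
proof -
  interpret semilocal_pullback S n m \<alpha>
    using assms by unfold_locales
  show ?thesis
    using local_R perinormal_R globally_perinormal_R not_integrally_closed_R integral_closure_R
    by blast
qed

end
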